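(* The operator $A_p:\mathcal X_p(\Omega)\to\mathcal X_p(\Omega)^*$ defined by $(A_pu,v):=\int_{[0,1]}\langle u,v\rangle_s\,d\mu^+(s)$ is continuous.
   Context: $p\in(1,N)$, $\Omega\subset\mathbb{R}^N$ bounded open, $\mu^+$ a finite Borel measure on $[0,1]$ with $\mu^+([\overline s,1])>0$ for some $\overline s\in(0,1]$. $c_{N,s,p}:=\frac{s\,2^{2s-1}\Gamma\left(\frac{ps+p+N-2}{2}\right)}{\pi^{N/2}\Gamma(1-s)}$; $[u]_{0,p}:=\|u\|_{L^p}$, $[u]_{s,p}:=\left(c_{N,s,p}\iint_{\mathbb{R}^{2N}}\frac{|u(x)-u(y)|^p}{|x-y|^{N+sp}}dxdy\right)^{1/p}$ for $s\in(0,1)$, $[u]_{1,p}:=\|\nabla u\|_{L^p}$. $\rho_p(u):=\left(\int_{[0,1]}[u]_{s,p}^pd\mu^+(s)\right)^{1/p}$; $\mathcal X_p(\Omega)$ is the space of measurable $u$ vanishing a.e. outside $\Omega$ with $\rho_p(u)<\infty$, normed by $\rho_p$, and $\mathcal X_p(\Omega)^*$ its dual. For $s\in(0,1)$, $\langle u,v\rangle_s:=c_{N,s,p}\iint_{\mathbb{R}^{2N}}\frac{|u(x)-u(y)|^{p-2}(u(x)-u(y))(v(x)-v(y))}{|x-y|^{N+sp}}dxdy$; $\langle u,v\rangle_0:=\int|u|^{p-2}uv$; $\langle u,v\rangle_1:=\int|\nabla u|^{p-2}\nabla u\cdot\nabla v$. *)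

theory Defs
  imports "HOL-Analysis.Analysis"
begin

text \<open>Functions on R^N are modelled as u :: 'a \<Rightarrow> real with 'a :: euclidean_space, N = DIM('a).\<close>

definition cNsp :: "nat \<Rightarrow> real \<Rightarrow> real \<Rightarrow> real" where
  "cNsp N s p = s * 2 powr (2 * s - 1) * Gamma ((p * s + p + real N - 2) / 2)
      / (pi powr (real N / 2) * Gamma (1 - s))"

definition has_weak_grad :: "('a::euclidean_space \<Rightarrow> real) \<Rightarrow> ('a \<Rightarrow> 'a) \<Rightarrow> bool" where
  "has_weak_grad u g \<longleftrightarrow>
     g \<in> borel_measurable lborel \<and>
     (\<forall>K. compact K \<longrightarrow> set_integrable lborel K (\<lambda>x. norm (g x)) \<and> set_integrable lborel K u) \<and>
     (\<forall>\<phi> \<phi>'. (\<forall>x. (\<phi> has_derivative \<phi>' x) (at x)) \<and> continuous_on UNIV \<phi>' \<and>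
              compact (closure {x. \<phi> x \<noteq> 0}) \<longrightarrow>
        (\<forall>b\<in>Basis. (\<integral>x. u x * \<phi>' x b \<partial>lborel) = - (\<integral>x. \<phi> x * (g x \<bullet> b) \<partial>lborel)))"

definition wgrad :: "('a::euclidean_space \<Rightarrow> real) \<Rightarrow> ('a \<Rightarrow> 'a)" where
  "wgrad u = (SOME g. has_weak_grad u g)"

definition seminorm_pow :: "real \<Rightarrow> real \<Rightarrow> ('a::euclidean_space \<Rightarrow> real) \<Rightarrow> ennreal" where
  "seminorm_pow p s u =
    (if s = 0 then (\<integral>\<^sup>+ x. ennreal (\<bar>u x\<bar> powr p) \<partial>lborel)
     else if s = 1 then
       (if \<exists>g. has_weak_grad u g then (\<integral>\<^sup>+ x. ennreal (norm (wgrad u x) powr p) \<partial>lborel) else \<infinity>)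
     else ennreal (cNsp DIM('a) s p) *
       (\<integral>\<^sup>+ z. ennreal (\<bar>u (fst z) - u (snd z)\<bar> powr p
                       / norm (fst z - snd z) powr (real DIM('a) + s * p)) \<partial>(lborel \<Otimes>\<^sub>M lborel)))"

definition rho_pow :: "real measure \<Rightarrow> real \<Rightarrow> ('a::euclidean_space \<Rightarrow> real) \<Rightarrow> ennreal" where
  "rho_pow mu p u = (\<integral>\<^sup>+ s. seminorm_pow p s u \<partial>mu)"

definition rho :: "real measure \<Rightarrow> real \<Rightarrow> ('a::euclidean_space \<Rightarrow> real) \<Rightarrow> real" where
  "rho mu p u = (enn2real (rho_pow mu p u)) powr (1 / p)"

definition Xp :: "real measure \<Rightarrow> real \<Rightarrow> 'a::euclidean_space set \<Rightarrow> ('a \<Rightarrow> real) set" where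
  "Xp mu p \<Omega> = {u. u \<in> borel_measurable lborel \<and> (AE x in lborel. x \<notin> \<Omega> \<longrightarrow> u x = 0)
                   \<and> rho_pow mu p u < \<infinity>}"

definition pairing :: "real \<Rightarrow> real \<Rightarrow> ('a::euclidean_space \<Rightarrow> real) \<Rightarrow> ('a \<Rightarrow> real) \<Rightarrow> real" where
  "pairing p s u v =
    (if s = 0 then (\<integral>x. \<bar>u x\<bar> powr (p - 2) * u x * v x \<partial>lborel)
     else if s = 1 then
       (\<integral>x. norm (wgrad u x) powr (p - 2) * (wgrad u x \<bullet> wgrad v x) \<partial>lborel)
     else cNsp DIM('a) s p *
       (\<integral>z. \<bar>u (fst z) - u (snd z)\<bar> powr (p - 2) * (u (fst z) - u (snd z)) * (v (fst z) - v (snd z))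
              / norm (fst z - snd z) powr (real DIM('a) + s * p) \<partial>(lborel \<Otimes>\<^sub>M lborel)))"

definition Ap :: "real measure \<Rightarrow> real \<Rightarrow> ('a::euclidean_space \<Rightarrow> real) \<Rightarrow> ('a \<Rightarrow> real) \<Rightarrow> real" where
  "Ap mu p u v = (\<integral>s. pairing p s u v \<partial>mu)"

end

(*
  For every order s the pairing is an integral of J(Du) \<bullet> Dv against a measure, where
  J(a) = |a|^(p-2) a is the duality map and Du is u itself (s = 0), the weak gradient of u (s = 1),
  or the increment u x - u y under the measure c_{N,s,p} |x - y|^(-N-sp) dx dy (0 < s < 1).
  Hoelder's inequality, first in x and then in s, gives |(A_p u, v)| <= rho(u)^(p-1) rho(v).
  Continuity rests on the estimate |J a - J b|^(p/(p-1)) <= C |a - b|^p + eta (|a|^p + |b|^p),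
  valid for every eta > 0 by homogeneity of J and its uniform continuity on the unit ball.
  Linearity in v at s = 1 needs weak gradients to be unique almost everywhere: integrals against
  C^1 bumps converge to integrals over boxes, and the Lebesgue differentiation theorem concludes.
*)

theory Submission
  imports Defs
begin

section \<open>Hoelder's inequality\<close>

lemma integrable_mult_if_integrable_powr:
  fixes f g :: "'x \<Rightarrow> real"
  assumes pq: "1 < p" "1 < q" "1/p + 1/q = 1"
    and "f \<in> borel_measurable M" "g \<in> borel_measurable M" "\<And>x. 0 \<le> f x" "\<And>x. 0 \<le> g x"
    and "integrable M (\<lambda>x. f x powr p)" "integrable M (\<lambda>x. g x powr q)"
  shows "integrable M (\<lambda>x. f x * g x)"
proof (rule Bochner_Integration.integrable_bound)
  show "integrable M (\<lambda>x. f x powr p / p + g x powr q / q)" using assms by auto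
  show "AE x in M. norm (f x * g x) \<le> norm (f x powr p / p + g x powr q / q)"
    using Youngs_inequality[OF pq] assms by (auto intro!: always_eventually simp: abs_mult)
qed (use assms in auto)

lemma Hoelder_inequality_real:
  fixes f g :: "'x \<Rightarrow> real"
  assumes pq: "1 < p" "1 < q" "1/p + 1/q = 1"
    and fm: "f \<in> borel_measurable M" and gm: "g \<in> borel_measurable M"
    and f0: "\<And>x. 0 \<le> f x" and g0: "\<And>x. 0 \<le> g x"
    and fi: "integrable M (\<lambda>x. f x powr p)" and gi: "integrable M (\<lambda>x. g x powr q)"
  shows "(\<integral>x. f x * g x \<partial>M) \<le> (\<integral>x. f x powr p \<partial>M) powr (1/p) * (\<integral>x. g x powr q \<partial>M) powr (1/q)"
proof -
  define A where "A = (\<integral>x. f x powr p \<partial>M)"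
  define B where "B = (\<integral>x. g x powr q \<partial>M)"
  have A0: "A \<ge> 0" and B0: "B \<ge> 0"
    unfolding A_def B_def by (auto intro: integral_nonneg_AE)
  note int = integrable_mult_if_integrable_powr[OF assms]
  show "(\<integral>x. f x * g x \<partial>M) \<le> A powr (1/p) * B powr (1/q)"
  proof (cases "A = 0 \<or> B = 0")
    case True
    then have "(AE x in M. f x powr p = 0) \<or> (AE x in M. g x powr q = 0)"
      using fi gi unfolding A_def B_def by (auto simp: integral_nonneg_eq_0_iff_AE)
    then have "AE x in M. f x * g x = 0" by (auto elim: eventually_mono)
    then have "(\<integral>x. f x * g x \<partial>M) = 0"
      using integral_nonneg_eq_0_iff_AE[OF int] f0 g0 by auto
    then show ?thesis using A0 B0 by simp
  next
    case False
    then have Ap: "A > 0" and Bp: "B > 0" using A0 B0 by auto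
    define a where "a = A powr (1/p)"
    define b where "b = B powr (1/q)"
    have ab: "a > 0" "b > 0" using Ap Bp by (auto simp: a_def b_def)
    have "a powr p = A" "b powr q = B" using Ap Bp pq by (simp_all add: a_def b_def powr_powr)
    then have Young: "(f x / a) * (g x / b) \<le> f x powr p / (p * A) + g x powr q / (q * B)" for x
      using Youngs_inequality[OF pq, of "f x / a" "g x / b"] f0 g0 ab
      by (simp add: powr_divide mult.commute)
    have "(\<integral>x. (f x / a) * (g x / b) \<partial>M) \<le> (\<integral>x. f x powr p / (p * A) + g x powr q / (q * B) \<partial>M)"
      using int fi gi Young by (intro integral_mono) auto
    also have "\<dots> = 1" using fi gi Ap Bp pq by (simp add: A_def[symmetric] B_def[symmetric])
    finally show ?thesis using ab by (simp add: a_def b_def field_simps)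
  qed
qed

lemma integral_Hoelder_bound:
  fixes A B h :: "'x \<Rightarrow> real"
  assumes p: "1 < p" and [measurable]: "A \<in> borel_measurable M" "B \<in> borel_measurable M" "h \<in> borel_measurable M"
    and A0: "\<And>s. 0 \<le> A s" and B0: "\<And>s. 0 \<le> B s" and Ai: "integrable M A" and Bi: "integrable M B"
    and hb: "AE s in M. \<bar>h s\<bar> \<le> A s powr ((p - 1) / p) * B s powr (1 / p)"
  shows "integrable M h"
    and "\<bar>\<integral>s. h s \<partial>M\<bar> \<le> (\<integral>s. A s \<partial>M) powr ((p - 1) / p) * (\<integral>s. B s \<partial>M) powr (1 / p)"
proof -
  have pq: "1 < p / (p - 1)" "1 / (p / (p - 1)) + 1 / p = 1" using p by (auto simp: field_simps)
  have "(A s powr ((p - 1) / p)) powr (p / (p - 1)) = A s" "(B s powr (1 / p)) powr p = B s" for s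
    using p A0[of s] B0[of s] by (simp_all add: powr_powr)
  note I = integrable_mult_if_integrable_powr[OF pq(1) p pq(2),
      of "\<lambda>s. A s powr ((p - 1) / p)" M "\<lambda>s. B s powr (1 / p)", unfolded this]
    and H = Hoelder_inequality_real[OF pq(1) p pq(2),
      of "\<lambda>s. A s powr ((p - 1) / p)" M "\<lambda>s. B s powr (1 / p)", unfolded this]
  show hi: "integrable M h"
    by (rule Bochner_Integration.integrable_bound[OF I]) (use Ai Bi hb in auto)
  have "\<bar>\<integral>s. h s \<partial>M\<bar> \<le> (\<integral>s. A s powr ((p - 1) / p) * B s powr (1 / p) \<partial>M)"
    using hi I Ai Bi hb by (intro order_trans[OF integral_abs_bound] integral_mono_AE) auto
  also have "\<dots> \<le> (\<integral>s. A s \<partial>M) powr ((p - 1) / p) * (\<integral>s. B s \<partial>M) powr (1 / p)"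
    using H Ai Bi p by simp
  finally show "\<bar>\<integral>s. h s \<partial>M\<bar> \<le> (\<integral>s. A s \<partial>M) powr ((p - 1) / p) * (\<integral>s. B s \<partial>M) powr (1 / p)" .
qed

lemma norm_add_powr_le:
  fixes x y :: "'b::real_normed_vector"
  assumes "0 \<le> p"
  shows "norm (x + y) powr p \<le> 2 powr p * (norm x powr p + norm y powr p)"
proof -
  have "norm (x + y) powr p \<le> (2 * max (norm x) (norm y)) powr p"
    using assms norm_triangle_ineq[of x y] by (intro powr_mono2) auto
  also have "\<dots> \<le> 2 powr p * (norm x powr p + norm y powr p)"
    by (auto simp: powr_mult max_def intro!: mult_left_mono)
  finally show ?thesis .
qed

section \<open>The duality map\<close>

definition duality_map :: "real \<Rightarrow> 'b::real_normed_vector \<Rightarrow> 'b" where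
  "duality_map p a = norm a powr (p - 2) *\<^sub>R a"

lemma duality_map_0 [simp]: "duality_map p 0 = 0"
  by (simp add: duality_map_def)

lemma norm_duality_map: "norm (duality_map p a) = norm a powr (p - 1)"
  by (simp add: duality_map_def mult.commute powr_mult_base)

lemma duality_map_scaleR_pos:
  "0 < t \<Longrightarrow> duality_map p (t *\<^sub>R a) = t powr (p - 1) *\<^sub>R duality_map p a"
  by (simp add: duality_map_def powr_mult mult_ac powr_mult_base)

lemma duality_map_scaleR_unit:
  fixes e :: "'b::real_normed_vector"
  shows "norm e = 1 \<Longrightarrow> duality_map p (a *\<^sub>R e) = duality_map p a *\<^sub>R e"
  by (simp add: duality_map_def)

lemma continuous_on_duality_map:
  assumes p: "1 < p"
  shows "continuous_on UNIV (duality_map p :: 'b::real_normed_vector \<Rightarrow> 'b)"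
proof -
  have "isCont (duality_map p) a" for a :: 'b
  proof (cases "a = 0")
    case False
    then show ?thesis unfolding duality_map_def by (intro continuous_intros) auto
  next
    case True
    have "((\<lambda>x. norm (duality_map p x)) \<longlongrightarrow> 0) (at (0::'b))"
      unfolding norm_duality_map
      by (rule tendsto_zero_powrI) (auto intro!: tendsto_eq_intros simp: p)
    then show ?thesis using True by (simp add: isCont_def tendsto_norm_zero_cancel)
  qed
  then show ?thesis by (simp add: continuous_at_imp_continuous_on)
qed

lemma borel_measurable_duality_map [measurable]:
  assumes "1 < p" "f \<in> borel_measurable M"
  shows "(\<lambda>x. duality_map p (f x :: 'b::euclidean_space)) \<in> borel_measurable M"
  using borel_measurable_continuous_on[OF continuous_on_duality_map[OF assms(1)] assms(2)] .

lemma duality_map_diff_estimate_unit_ball: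
  assumes p: "1 < p" and eta: "0 < \<eta>"
  shows "\<exists>C\<ge>0. \<forall>a b::'b::euclidean_space. norm a \<le> 1 \<longrightarrow> norm b \<le> 1 \<longrightarrow>
           norm (duality_map p a - duality_map p b) powr (p / (p - 1)) \<le> C * norm (a - b) powr p + \<eta>"
proof -
  define q where "q = p / (p - 1)"
  have q1: "1 < q" using p by (simp add: q_def field_simps)
  define \<epsilon> where "\<epsilon> = \<eta> powr (1 / q)"
  have epos: "0 < \<epsilon>" and eq: "\<epsilon> powr q = \<eta>"
    using eta q1 by (simp_all add: \<epsilon>_def powr_powr)
  have "uniformly_continuous_on (cball (0::'b) 1) (duality_map p)"
    by (rule compact_uniformly_continuous)
       (auto intro: continuous_on_subset[OF continuous_on_duality_map[OF p]])
  then obtain \<delta> where dpos: "\<delta> > 0" and dU: "\<And>x x'. x \<in> cball (0::'b) 1 \<Longrightarrow> x' \<in> cball 0 1 \<Longrightarrow>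
      dist x' x < \<delta> \<Longrightarrow> dist (duality_map p x') (duality_map p x) < \<epsilon>"
    unfolding uniformly_continuous_on_def using epos by metis
  define C where "C = 2 powr q / \<delta> powr p"
  have "norm (duality_map p a - duality_map p b) powr q \<le> C * norm (a - b) powr p + \<eta>"
    if ab: "norm a \<le> 1" "norm b \<le> 1" for a b :: 'b
  proof (cases "norm (a - b) < \<delta>")
    case True
    then have "norm (duality_map p a - duality_map p b) < \<epsilon>"
      using dU[of b a] ab by (simp add: dist_norm)
    then have "norm (duality_map p a - duality_map p b) powr q \<le> \<eta>"
      using q1 eq by (metis less_eq_real_def powr_mono2 norm_ge_zero zero_le_one less_trans zero_less_one)
    then show ?thesis by (simp add: C_def add_increasing)
  next
    case False
    have "norm (duality_map p a - duality_map p b) \<le> norm a powr (p - 1) + norm b powr (p - 1)"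
      by (metis norm_triangle_ineq4 norm_duality_map)
    also have "\<dots> \<le> 1 + 1"
      using ab p powr_mono2[of "p - 1" _ 1] by (intro add_mono) auto
    finally have "norm (duality_map p a - duality_map p b) powr q \<le> 2 powr q"
      using q1 by (intro powr_mono2) auto
    also have "\<dots> \<le> C * norm (a - b) powr p"
      using False dpos p powr_mono2[of p \<delta> "norm (a - b)"] by (simp add: C_def field_simps)
    finally show ?thesis using eta by simp
  qed
  moreover have "C \<ge> 0" by (simp add: C_def)
  ultimately show ?thesis unfolding q_def by blast
qed

lemma duality_map_diff_estimate:
  assumes p: "1 < p" and eta: "0 < \<eta>"
  shows "\<exists>C\<ge>0. \<forall>a b::'b::euclidean_space.
           norm (duality_map p a - duality_map p b) powr (p / (p - 1))
             \<le> C * norm (a - b) powr p + \<eta> * (norm a powr p + norm b powr p)"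
proof -
  define q where "q = p / (p - 1)"
  have pq: "(p - 1) * q = p" using p by (simp add: q_def field_simps)
  obtain C where C: "0 \<le> C" and unit: "\<And>a b::'b. norm a \<le> 1 \<Longrightarrow> norm b \<le> 1 \<Longrightarrow>
      norm (duality_map p a - duality_map p b) powr q \<le> C * norm (a - b) powr p + \<eta>"
    using duality_map_diff_estimate_unit_ball[OF p eta] unfolding q_def by blast
  have "norm (duality_map p a - duality_map p b) powr q
          \<le> C * norm (a - b) powr p + \<eta> * (norm a powr p + norm b powr p)" for a b :: 'b
  proof (cases "a = 0 \<and> b = 0")
    case True then show ?thesis using C eta by simp
  next
    case False
    define r where "r = max (norm a) (norm b)"
    have r: "r > 0" using False by (auto simp: r_def max_def)
    define a' where "a' = (1 / r) *\<^sub>R a"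
    define b' where "b' = (1 / r) *\<^sub>R b"
    have a'b': "norm a' \<le> 1" "norm b' \<le> 1" using r by (simp_all add: a'_def b'_def r_def field_simps)
    have ab: "a = r *\<^sub>R a'" "b = r *\<^sub>R b'" using r by (auto simp: a'_def b'_def)
    have "norm (duality_map p a - duality_map p b) powr q
            = r powr p * norm (duality_map p a' - duality_map p b') powr q"
      using r by (simp add: ab duality_map_scaleR_pos powr_mult powr_powr pq flip: scaleR_diff_right)
    also have "\<dots> \<le> r powr p * (C * norm (a' - b') powr p + \<eta>)"
      using unit[OF a'b'] r by simp
    also have "\<dots> = C * norm (a - b) powr p + \<eta> * r powr p"
      using r by (simp add: ab powr_mult algebra_simps flip: scaleR_diff_right)
    also have "r powr p \<le> norm a powr p + norm b powr p" by (auto simp: r_def max_def)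
    finally show ?thesis using eta by simp
  qed
  then show ?thesis using C unfolding q_def by blast
qed

lemma duality_map_diff_estimate_real:
  fixes a b C \<eta> :: real
  assumes "\<And>a b::'b::euclidean_space. norm (duality_map p a - duality_map p b) powr (p / (p - 1))
             \<le> C * norm (a - b) powr p + \<eta> * (norm a powr p + norm b powr p)"
  shows "norm (duality_map p a - duality_map p b) powr (p / (p - 1))
           \<le> C * norm (a - b) powr p + \<eta> * (norm a powr p + norm b powr p)"
proof -
  obtain e :: 'b where e: "norm e = 1" using norm_Basis SOME_Basis by blast
  from assms[of "a *\<^sub>R e" "b *\<^sub>R e"] show ?thesis
    by (simp add: e duality_map_scaleR_unit flip: scaleR_diff_left)
qed

section \<open>Integrals of powers and duality pairings\<close>

definition norm_powr_nn_integral :: "real \<Rightarrow> 'x measure \<Rightarrow> ('x \<Rightarrow> 'b::real_normed_vector) \<Rightarrow> ennreal" where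
  "norm_powr_nn_integral p M f = (\<integral>\<^sup>+ x. ennreal (norm (f x) powr p) \<partial>M)"

definition duality_pairing :: "real \<Rightarrow> 'x measure \<Rightarrow> ('x \<Rightarrow> 'b::euclidean_space) \<Rightarrow> ('x \<Rightarrow> 'b) \<Rightarrow> real" where
  "duality_pairing p M f g = (\<integral>x. duality_map p (f x) \<bullet> g x \<partial>M)"

lemma norm_powr_nn_integral_eq_integral:
  "integrable M (\<lambda>x. norm (f x) powr p) \<Longrightarrow>
     norm_powr_nn_integral p M f = ennreal (\<integral>x. norm (f x) powr p \<partial>M)"
  unfolding norm_powr_nn_integral_def by (rule nn_integral_eq_integral) auto

lemma integrable_norm_powr_if_finite:
  "f \<in> borel_measurable M \<Longrightarrow> norm_powr_nn_integral p M f < \<infinity> \<Longrightarrow>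
     integrable M (\<lambda>x. norm (f x) powr p)"
  unfolding norm_powr_nn_integral_def by (rule integrableI_nonneg) auto

lemma enn2real_norm_powr_nn_integral:
  "integrable M (\<lambda>x. norm (f x) powr p) \<Longrightarrow>
     enn2real (norm_powr_nn_integral p M f) = (\<integral>x. norm (f x) powr p \<partial>M)"
  by (simp add: norm_powr_nn_integral_eq_integral)

lemma norm_powr_nn_integral_lincomb:
  fixes f g :: "'x \<Rightarrow> 'b::euclidean_space"
  assumes p: "0 \<le> p" and [measurable]: "f \<in> borel_measurable M" "g \<in> borel_measurable M"
    and ff: "norm_powr_nn_integral p M f < \<infinity>" and gf: "norm_powr_nn_integral p M g < \<infinity>"
  shows "norm_powr_nn_integral p M (\<lambda>x. a *\<^sub>R f x + b *\<^sub>R g x) < \<infinity>"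
    and "enn2real (norm_powr_nn_integral p M (\<lambda>x. a *\<^sub>R f x + b *\<^sub>R g x)) \<le>
       2 powr p * (\<bar>a\<bar> powr p * enn2real (norm_powr_nn_integral p M f)
                 + \<bar>b\<bar> powr p * enn2real (norm_powr_nn_integral p M g))"
proof -
  have fi: "integrable M (\<lambda>x. norm (f x) powr p)" and gi: "integrable M (\<lambda>x. norm (g x) powr p)"
    using ff gf by (simp_all add: integrable_norm_powr_if_finite)
  have bound: "norm (a *\<^sub>R f x + b *\<^sub>R g x) powr p
      \<le> 2 powr p * (\<bar>a\<bar> powr p * norm (f x) powr p + \<bar>b\<bar> powr p * norm (g x) powr p)" for x
    using norm_add_powr_le[OF p, of "a *\<^sub>R f x" "b *\<^sub>R g x"] by (simp add: powr_mult)
  have hi: "integrable M (\<lambda>x. norm (a *\<^sub>R f x + b *\<^sub>R g x) powr p)"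
  proof (rule Bochner_Integration.integrable_bound[OF _ _ always_eventually])
    show "integrable M (\<lambda>x. 2 powr p * (\<bar>a\<bar> powr p * norm (f x) powr p + \<bar>b\<bar> powr p * norm (g x) powr p))"
      using fi gi by auto
    show "(\<lambda>x. norm (a *\<^sub>R f x + b *\<^sub>R g x) powr p) \<in> borel_measurable M" by measurable
  qed (use bound in \<open>auto intro: order_trans[OF _ abs_ge_self]\<close>)
  then show "norm_powr_nn_integral p M (\<lambda>x. a *\<^sub>R f x + b *\<^sub>R g x) < \<infinity>"
    by (simp add: norm_powr_nn_integral_eq_integral)
  have "(\<integral>x. norm (a *\<^sub>R f x + b *\<^sub>R g x) powr p \<partial>M)
      \<le> (\<integral>x. 2 powr p * (\<bar>a\<bar> powr p * norm (f x) powr p + \<bar>b\<bar> powr p * norm (g x) powr p) \<partial>M)"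
    using hi fi gi bound by (intro integral_mono) auto
  then show "enn2real (norm_powr_nn_integral p M (\<lambda>x. a *\<^sub>R f x + b *\<^sub>R g x)) \<le>
       2 powr p * (\<bar>a\<bar> powr p * enn2real (norm_powr_nn_integral p M f)
                 + \<bar>b\<bar> powr p * enn2real (norm_powr_nn_integral p M g))"
    using hi fi gi by (simp add: enn2real_norm_powr_nn_integral)
qed

lemma inner_integral_Hoelder:
  fixes f g :: "'x \<Rightarrow> 'b::euclidean_space"
  assumes p: "1 < p" and fm: "f \<in> borel_measurable M" and gm: "g \<in> borel_measurable M"
    and F: "\<And>x. 0 \<le> F x" "\<And>x. norm (f x) \<le> F x" and Fm: "F \<in> borel_measurable M"
    and Fi: "integrable M (\<lambda>x. F x powr (p / (p - 1)))" and gi: "integrable M (\<lambda>x. norm (g x) powr p)"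
  shows "integrable M (\<lambda>x. f x \<bullet> g x)"
    and "\<bar>\<integral>x. f x \<bullet> g x \<partial>M\<bar>
           \<le> (\<integral>x. F x powr (p / (p - 1)) \<partial>M) powr ((p - 1) / p) * (\<integral>x. norm (g x) powr p \<partial>M) powr (1 / p)"
proof -
  have pq: "1 < p / (p - 1)" "1 / (p / (p - 1)) + 1 / p = 1" using p by (auto simp: field_simps)
  have gnm: "(\<lambda>x. norm (g x)) \<in> borel_measurable M" using gm by measurable
  note I = integrable_mult_if_integrable_powr[OF pq(1) p pq(2) Fm gnm F(1) norm_ge_zero Fi gi]
    and H = Hoelder_inequality_real[OF pq(1) p pq(2) Fm gnm F(1) norm_ge_zero Fi gi]
  have bd: "\<bar>f x \<bullet> g x\<bar> \<le> F x * norm (g x)" for x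
    by (meson Cauchy_Schwarz_ineq2 F(2) mult_right_mono norm_ge_zero order_trans)
  show int: "integrable M (\<lambda>x. f x \<bullet> g x)"
    by (rule Bochner_Integration.integrable_bound[OF I]) (use fm gm bd F in \<open>auto simp: abs_mult\<close>)
  have "\<bar>\<integral>x. f x \<bullet> g x \<partial>M\<bar> \<le> (\<integral>x. F x * norm (g x) \<partial>M)"
    using int I bd by (intro order_trans[OF integral_abs_bound] integral_mono) (auto simp: gm)
  also have "\<dots> \<le> (\<integral>x. F x powr (p / (p - 1)) \<partial>M) powr ((p - 1) / p) * (\<integral>x. norm (g x) powr p \<partial>M) powr (1 / p)"
    using H gm by simp
  finally show "\<bar>\<integral>x. f x \<bullet> g x \<partial>M\<bar> \<le> \<dots>" .
qed

lemma duality_pairing_bound: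
  fixes f g :: "'x \<Rightarrow> 'b::euclidean_space"
  assumes p: "1 < p" and fm: "f \<in> borel_measurable M" and gm: "g \<in> borel_measurable M"
    and ff: "norm_powr_nn_integral p M f < \<infinity>" and gf: "norm_powr_nn_integral p M g < \<infinity>"
  shows "integrable M (\<lambda>x. duality_map p (f x) \<bullet> g x)"
    and "\<bar>duality_pairing p M f g\<bar>
           \<le> enn2real (norm_powr_nn_integral p M f) powr ((p - 1) / p)
             * enn2real (norm_powr_nn_integral p M g) powr (1 / p)"
proof -
  have fi: "integrable M (\<lambda>x. norm (f x) powr p)" and gi: "integrable M (\<lambda>x. norm (g x) powr p)"
    using fm gm ff gf by (simp_all add: integrable_norm_powr_if_finite)
  have "(norm (f x) powr (p - 1)) powr (p / (p - 1)) = norm (f x) powr p" for x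
    using p by (simp add: powr_powr)
  note H = inner_integral_Hoelder[OF p _ gm, of "\<lambda>x. duality_map p (f x)" "\<lambda>x. norm (f x) powr (p - 1)",
      unfolded this]
  show "integrable M (\<lambda>x. duality_map p (f x) \<bullet> g x)"
    using H(1) p fm fi gi by (simp add: norm_duality_map)
  show "\<bar>duality_pairing p M f g\<bar>
          \<le> enn2real (norm_powr_nn_integral p M f) powr ((p - 1) / p)
            * enn2real (norm_powr_nn_integral p M g) powr (1 / p)"
    using H(2) p fm fi gi by (simp add: norm_duality_map duality_pairing_def enn2real_norm_powr_nn_integral)
qed

lemma duality_pairing_lincomb_right:
  fixes f g h :: "'x \<Rightarrow> 'b::euclidean_space"
  assumes p: "1 < p" and fm: "f \<in> borel_measurable M" and gm: "g \<in> borel_measurable M"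
    and hm: "h \<in> borel_measurable M"
    and ff: "norm_powr_nn_integral p M f < \<infinity>" and gf: "norm_powr_nn_integral p M g < \<infinity>"
    and hf: "norm_powr_nn_integral p M h < \<infinity>"
  shows "duality_pairing p M f (\<lambda>x. a *\<^sub>R g x + b *\<^sub>R h x)
           = a * duality_pairing p M f g + b * duality_pairing p M f h"
  using duality_pairing_bound(1)[OF p fm gm ff gf] duality_pairing_bound(1)[OF p fm hm ff hf]
  by (simp add: duality_pairing_def inner_add_right)

lemma duality_pairing_diff_bound:
  fixes f1 f g :: "'x \<Rightarrow> 'b::euclidean_space"
  assumes p: "1 < p" and [measurable]: "f1 \<in> borel_measurable M" "f \<in> borel_measurable M" "g \<in> borel_measurable M"
    and f1f: "norm_powr_nn_integral p M f1 < \<infinity>" and ff: "norm_powr_nn_integral p M f < \<infinity>"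
    and gf: "norm_powr_nn_integral p M g < \<infinity>"
    and C: "0 \<le> C" "0 \<le> \<eta>"
    and estimate: "\<And>a b::'b. norm (duality_map p a - duality_map p b) powr (p / (p - 1))
                     \<le> C * norm (a - b) powr p + \<eta> * (norm a powr p + norm b powr p)"
  shows "\<bar>duality_pairing p M f1 g - duality_pairing p M f g\<bar> \<le>
     (C * enn2real (norm_powr_nn_integral p M (\<lambda>x. f1 x - f x))
      + \<eta> * (enn2real (norm_powr_nn_integral p M f1) + enn2real (norm_powr_nn_integral p M f)))
        powr ((p - 1) / p) * enn2real (norm_powr_nn_integral p M g) powr (1 / p)"
proof -
  have f1i: "integrable M (\<lambda>x. norm (f1 x) powr p)" and fi: "integrable M (\<lambda>x. norm (f x) powr p)"
    and gi: "integrable M (\<lambda>x. norm (g x) powr p)"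
    using f1f ff gf by (simp_all add: integrable_norm_powr_if_finite)
  have "norm_powr_nn_integral p M (\<lambda>x. 1 *\<^sub>R f1 x + (- 1) *\<^sub>R f x) < \<infinity>"
    using p by (intro norm_powr_nn_integral_lincomb f1f ff) auto
  then have di: "integrable M (\<lambda>x. norm (f1 x - f x) powr p)"
    by (intro integrable_norm_powr_if_finite) auto
  define E where "E = (\<lambda>x. C * norm (f1 x - f x) powr p + \<eta> * (norm (f1 x) powr p + norm (f x) powr p))"
  have Ei: "integrable M E" using di f1i fi by (simp add: E_def)
  have Fi: "integrable M (\<lambda>x. norm (duality_map p (f1 x) - duality_map p (f x)) powr (p / (p - 1)))"
    by (rule Bochner_Integration.integrable_bound[OF Ei _ always_eventually])
       (use p estimate in \<open>auto simp: E_def intro: order_trans[OF _ abs_ge_self]\<close>)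
  have "\<bar>duality_pairing p M f1 g - duality_pairing p M f g\<bar>
      = \<bar>\<integral>x. (duality_map p (f1 x) - duality_map p (f x)) \<bullet> g x \<partial>M\<bar>"
    using duality_pairing_bound(1)[OF p _ _ f1f gf] duality_pairing_bound(1)[OF p _ _ ff gf]
    by (simp add: duality_pairing_def inner_diff_left)
  also have "\<dots> \<le> (\<integral>x. norm (duality_map p (f1 x) - duality_map p (f x)) powr (p / (p - 1)) \<partial>M)
                    powr ((p - 1) / p) * (\<integral>x. norm (g x) powr p \<partial>M) powr (1 / p)"
    using p Fi gi by (intro inner_integral_Hoelder(2)) auto
  also have "\<dots> \<le> (\<integral>x. E x \<partial>M) powr ((p - 1) / p) * (\<integral>x. norm (g x) powr p \<partial>M) powr (1 / p)"
    using p Fi Ei estimate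
    by (intro mult_right_mono powr_mono2 integral_mono integral_nonneg_AE) (auto simp: E_def)
  also have "(\<integral>x. E x \<partial>M) = C * (\<integral>x. norm (f1 x - f x) powr p \<partial>M)
                              + \<eta> * ((\<integral>x. norm (f1 x) powr p \<partial>M) + (\<integral>x. norm (f x) powr p \<partial>M))"
    using di f1i fi by (simp add: E_def)
  finally show ?thesis
    using di f1i fi gi by (simp add: enn2real_norm_powr_nn_integral)
qed

section \<open>Uniqueness of weak gradients\<close>

lemma AE_zero_if_box_integrals_zero:
  fixes r :: "'a::euclidean_space \<Rightarrow> real"
  assumes int: "\<And>a b. set_integrable lborel (box a b) r"
    and zero: "\<And>a b. (LINT x:box a b|lborel. r x) = 0"
  shows "AE x in lborel. r x = 0"
proof -
  have "r integrable_on cbox a b" "integral (cbox a b) r = 0" for a b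
    using set_borel_integral_eq_integral[OF int[of a b]] zero[of a b]
    by (simp_all add: integrable_on_open_interval integral_open_interval)
  then obtain N where N: "negligible N"
    and avg: "\<And>x e. x \<notin> N \<Longrightarrow> 0 < e \<Longrightarrow> \<exists>d>0. \<forall>h. 0 < h \<and> h < d \<longrightarrow>
                 norm (integral (cbox x (x + h *\<^sub>R One)) r /\<^sub>R h ^ DIM('a) - r x) < e"
    using integrable_ccontinuous_explicit \<comment> \<open>Lebesgue's differentiation theorem\<close> by metis
  have "r x = 0" if x: "x \<notin> N" for x
  proof (rule ccontr)
    assume "r x \<noteq> 0"
    then obtain d where "d > 0" and d: "\<forall>h. 0 < h \<and> h < d \<longrightarrow>
        norm (integral (cbox x (x + h *\<^sub>R One)) r /\<^sub>R h ^ DIM('a) - r x) < \<bar>r x\<bar>"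
      using avg[of x "\<bar>r x\<bar>"] x by auto
    then have "norm (integral (cbox x (x + (d / 2) *\<^sub>R One)) r /\<^sub>R (d / 2) ^ DIM('a) - r x) < \<bar>r x\<bar>"
      by simp
    then show False using \<open>\<And>a b. integral (cbox a b) r = 0\<close> by simp
  qed
  then have "{x. r x \<noteq> 0} \<in> null_sets lebesgue"
    using N by (metis (mono_tags) mem_Collect_eq negligible_iff_null_sets negligible_subset subsetI)
  then have "AE x in lebesgue. r x = 0"
    by (auto dest: AE_not_in)
  then show ?thesis by (simp add: AE_completion_iff)
qed

lemma DERIV_max0_square: "DERIV (\<lambda>y. (max 0 y)\<^sup>2) y :> 2 * max 0 (y::real)"
proof -
  consider "y > 0" | "y < 0" | "y = 0" by linarith
  then show ?thesis
  proof cases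
    case 1
    have "DERIV (\<lambda>y. y\<^sup>2) y :> 2 * max 0 y" using 1 by (auto intro!: derivative_eq_intros)
    then show ?thesis
      by (rule has_field_derivative_transform_within_open[where S="{0<..}"]) (use 1 in auto)
  next
    case 2
    have "DERIV (\<lambda>y. 0) y :> 2 * max 0 y" using 2 by (auto intro!: derivative_eq_intros)
    then show ?thesis
      by (rule has_field_derivative_transform_within_open[where S="{..<0}"]) (use 2 in auto)
  next
    case 3
    have "((\<lambda>h::real. (max 0 h)\<^sup>2 / h) \<longlongrightarrow> 0) (at 0)"
    proof (rule Lim_null_comparison)
      show "\<forall>\<^sub>F h in at 0. norm ((max 0 h)\<^sup>2 / h) \<le> \<bar>h\<bar>"
        by (intro always_eventually allI) (auto simp: max_def power2_eq_square abs_mult)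
    qed (intro tendsto_eq_intros, auto)
    then show ?thesis using 3 by (simp add: has_field_derivative_iff)
  qed
qed

definition bump :: "real \<Rightarrow> real \<Rightarrow> real \<Rightarrow> real" where
  "bump a c t = (max 0 ((t - a) * (c - t)))\<^sup>2"

definition bump_deriv :: "real \<Rightarrow> real \<Rightarrow> real \<Rightarrow> real" where
  "bump_deriv a c t = 2 * max 0 ((t - a) * (c - t)) * (a + c - 2 * t)"

lemma DERIV_bump: "DERIV (bump a c) t :> bump_deriv a c t"
  unfolding bump_def bump_deriv_def
  by (rule DERIV_chain2[OF DERIV_max0_square]) (auto intro!: derivative_eq_intros)

lemma bump_nonneg: "0 \<le> bump a c t"
  by (simp add: bump_def)

lemma bump_pos_iff:
  assumes "a < c"
  shows "0 < bump a c t \<longleftrightarrow> a < t \<and> t < c"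
proof -
  have "0 < bump a c t \<longleftrightarrow> 0 < (t - a) * (c - t)"
    unfolding bump_def by (cases "0 < (t - a) * (c - t)") (auto simp: max_def)
  also have "\<dots> \<longleftrightarrow> a < t \<and> t < c" using assms by (auto simp: zero_less_mult_iff)
  finally show ?thesis .
qed

lemma continuous_on_bump: "continuous_on UNIV (bump a c)"
  unfolding bump_def by (intro continuous_intros)

definition plateau :: "nat \<Rightarrow> real \<Rightarrow> real \<Rightarrow> real \<Rightarrow> real" where
  "plateau n a c t = n * bump a c t / (1 + n * bump a c t)"

definition plateau_deriv :: "nat \<Rightarrow> real \<Rightarrow> real \<Rightarrow> real \<Rightarrow> real" where
  "plateau_deriv n a c t = n * bump_deriv a c t / (1 + n * bump a c t)\<^sup>2"

lemma plateau_denominator_pos: "0 < 1 + real n * bump a c t"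
  by (simp add: add_pos_nonneg bump_nonneg)

lemma DERIV_plateau: "DERIV (plateau n a c) t :> plateau_deriv n a c t"
  unfolding plateau_def plateau_deriv_def using plateau_denominator_pos[of n a c t]
  by (auto intro!: derivative_eq_intros DERIV_bump simp: field_simps power2_eq_square)

lemma continuous_on_plateau: "continuous_on UNIV (plateau n a c)"
  unfolding plateau_def using plateau_denominator_pos
  by (intro continuous_intros continuous_on_bump) (metis less_irrefl)

lemma continuous_on_plateau_deriv: "continuous_on UNIV (plateau_deriv n a c)"
  unfolding plateau_deriv_def bump_deriv_def using plateau_denominator_pos
  by (intro continuous_intros continuous_on_bump) (metis less_irrefl zero_less_power)

lemma plateau_bounds: "0 \<le> plateau n a c t" "plateau n a c t \<le> 1"
proof -
  have "0 \<le> real n * bump a c t" by (simp add: bump_nonneg)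
  then show "0 \<le> plateau n a c t" "plateau n a c t \<le> 1" by (simp_all add: plateau_def)
qed

lemma plateau_eq_0:
  assumes "a < c" "\<not> (a < t \<and> t < c)"
  shows "plateau n a c t = 0"
proof -
  have "bump a c t = 0"
    using bump_pos_iff[OF assms(1), of t] bump_nonneg[of a c t] assms(2) by linarith
  then show ?thesis by (simp add: plateau_def)
qed

lemma plateau_tendsto_1:
  assumes "a < t" "t < c"
  shows "(\<lambda>n. plateau n a c t) \<longlonglongrightarrow> 1"
proof -
  have b: "0 < bump a c t" using assms bump_pos_iff[of a c t] by simp
  have "filterlim (\<lambda>n. 1 + bump a c t * real n) at_top sequentially"
    by (intro filterlim_tendsto_add_at_top[OF tendsto_const] filterlim_tendsto_pos_mult_at_top[OF tendsto_const b]
        filterlim_real_sequentially)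
  then have "(\<lambda>n. 1 - inverse (1 + bump a c t * real n)) \<longlonglongrightarrow> 1 - 0"
    by (intro tendsto_diff tendsto_const tendsto_inverse_0_at_top)
  moreover have "plateau n a c t = 1 - inverse (1 + bump a c t * real n)" for n
  proof -
    have "0 < 1 + bump a c t * real n" using b by (simp add: add_pos_nonneg)
    then show ?thesis by (simp add: plateau_def field_simps)
  qed
  ultimately show ?thesis by simp
qed

definition box_bump :: "nat \<Rightarrow> 'a::euclidean_space \<Rightarrow> 'a \<Rightarrow> 'a \<Rightarrow> real" where
  "box_bump n a c x = (\<Prod>i\<in>Basis. plateau n (a \<bullet> i) (c \<bullet> i) (x \<bullet> i))"

definition box_bump_deriv :: "nat \<Rightarrow> 'a::euclidean_space \<Rightarrow> 'a \<Rightarrow> 'a \<Rightarrow> 'a \<Rightarrow> real" where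
  "box_bump_deriv n a c x = (\<lambda>v. \<Sum>i\<in>Basis. (v \<bullet> i * plateau_deriv n (a \<bullet> i) (c \<bullet> i) (x \<bullet> i)) *
      (\<Prod>j\<in>Basis - {i}. plateau n (a \<bullet> j) (c \<bullet> j) (x \<bullet> j)))"

lemma box_bump_bounds: "0 \<le> box_bump n a c x" "box_bump n a c x \<le> 1"
  unfolding box_bump_def by (auto intro!: prod_nonneg prod_le_1 simp: plateau_bounds)

lemma box_bump_eq_0:
  assumes "box a c \<noteq> {}" "x \<notin> box a c"
  shows "box_bump n a c x = 0"
proof -
  obtain i where i: "i \<in> Basis" "\<not> (a \<bullet> i < x \<bullet> i \<and> x \<bullet> i < c \<bullet> i)"
    using assms(2) by (auto simp: mem_box)
  then have "plateau n (a \<bullet> i) (c \<bullet> i) (x \<bullet> i) = 0"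
    using assms(1) by (intro plateau_eq_0) (auto simp: box_ne_empty)
  then show ?thesis unfolding box_bump_def using i(1) by (intro prod_zero) auto
qed

lemma box_bump_tendsto_indicator:
  assumes "box a c \<noteq> {}"
  shows "(\<lambda>n. box_bump n a c x) \<longlonglongrightarrow> indicator (box a c) x"
proof (cases "x \<in> box a c")
  case True
  have "(\<lambda>n. box_bump n a c x) \<longlonglongrightarrow> (\<Prod>i\<in>(Basis::'a set). 1)"
    unfolding box_bump_def
    by (intro tendsto_prod plateau_tendsto_1) (use True in \<open>auto simp: mem_box\<close>)
  then show ?thesis using True by simp
qed (simp add: box_bump_eq_0[OF assms])

definition test_function :: "('a::euclidean_space \<Rightarrow> real) \<Rightarrow> ('a \<Rightarrow> 'a \<Rightarrow> real) \<Rightarrow> bool" where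
  "test_function \<phi> \<phi>' \<longleftrightarrow> (\<forall>x. (\<phi> has_derivative \<phi>' x) (at x)) \<and> continuous_on UNIV \<phi>' \<and>
     compact (closure {x. \<phi> x \<noteq> 0})"

lemma test_function_box_bump:
  assumes "box a c \<noteq> {}"
  shows "test_function (box_bump n a c) (box_bump_deriv n a c)"
  unfolding test_function_def
proof (intro conjI allI)
  fix x :: 'a
  have "((\<lambda>x. plateau n (a \<bullet> i) (c \<bullet> i) (x \<bullet> i)) has_derivative
          (\<lambda>v. v \<bullet> i * plateau_deriv n (a \<bullet> i) (c \<bullet> i) (x \<bullet> i))) (at x)" for i :: 'a
    by (rule DERIV_compose_FDERIV[OF DERIV_plateau]) (auto intro!: derivative_eq_intros)
  then show "(box_bump n a c has_derivative box_bump_deriv n a c x) (at x)"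
    unfolding box_bump_def box_bump_deriv_def by (rule has_derivative_prod)
next
  show "continuous_on UNIV (box_bump_deriv n a c)"
    unfolding box_bump_deriv_def
    by (intro continuous_intros continuous_on_compose2[OF continuous_on_plateau]
        continuous_on_compose2[OF continuous_on_plateau_deriv]) auto
next
  have "{x. box_bump n a c x \<noteq> 0} \<subseteq> cbox a c"
    using box_bump_eq_0[OF assms] box_subset_cbox[of a c] by blast
  then have "closure {x. box_bump n a c x \<noteq> 0} \<subseteq> cbox a c"
    by (intro closure_minimal) auto
  then show "compact (closure {x. box_bump n a c x \<noteq> 0})"
    by (meson bounded_cbox bounded_subset closed_closure compact_eq_bounded_closed)
qed

lemma bounded_if_continuous_vanishing_outside_compact:
  fixes f :: "'a::topological_space \<Rightarrow> real"
  assumes "continuous_on UNIV f" "compact K" "\<And>x. x \<notin> K \<Longrightarrow> f x = 0"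
  shows "\<exists>B. \<forall>x. \<bar>f x\<bar> \<le> B"
proof -
  have "bounded (f ` K)"
    using assms by (intro compact_imp_bounded compact_continuous_image) (auto intro: continuous_on_subset)
  then obtain B where "\<And>x. x \<in> K \<Longrightarrow> \<bar>f x\<bar> \<le> B" by (auto simp: bounded_iff)
  then have "\<bar>f x\<bar> \<le> max B 0" for x using assms(3)[of x] by (cases "x \<in> K") (auto simp: le_max_iff_disj)
  then show ?thesis by blast
qed

lemma integrable_mult_vanishing_outside:
  fixes f g :: "'x \<Rightarrow> real"
  assumes fi: "set_integrable M K f" and gm: "g \<in> borel_measurable M"
    and gB: "\<And>x. \<bar>g x\<bar> \<le> B" and g0: "\<And>x. x \<notin> K \<Longrightarrow> g x = 0"
  shows "integrable M (\<lambda>x. g x * f x)"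
proof -
  have fi': "integrable M (\<lambda>x. indicator K x * f x)" using fi by (simp add: set_integrable_def)
  have eq: "g x * f x = g x * (indicator K x * f x)" for x using g0[of x] by (cases "x \<in> K") auto
  have "integrable M (\<lambda>x. g x * (indicator K x * f x))"
  proof (rule Bochner_Integration.integrable_bound[OF _ _ always_eventually])
    show "integrable M (\<lambda>x. B * \<bar>indicator K x * f x\<bar>)" using fi' by auto
    show "(\<lambda>x. g x * (indicator K x * f x)) \<in> borel_measurable M"
      using gm borel_measurable_integrable[OF fi'] by measurable
    show "\<forall>x. norm (g x * (indicator K x * f x)) \<le> norm (B * \<bar>indicator K x * f x\<bar>)"
    proof
      fix x
      have "norm (g x * (indicator K x * f x)) \<le> B * \<bar>indicator K x * f x\<bar>"
        using gB[of x] by (simp add: abs_mult mult_right_mono)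
      also have "\<dots> \<le> norm (B * \<bar>indicator K x * f x\<bar>)" by simp
      finally show "norm (g x * (indicator K x * f x)) \<le> norm (B * \<bar>indicator K x * f x\<bar>)" .
    qed
  qed
  then show ?thesis by (simp only: eq)
qed

lemma continuous_on_test_function:
  "test_function \<phi> \<phi>' \<Longrightarrow> continuous_on UNIV \<phi>"
  unfolding test_function_def by (meson continuous_at_imp_continuous_on has_derivative_continuous)

lemma continuous_on_test_function_deriv:
  "test_function \<phi> \<phi>' \<Longrightarrow> continuous_on UNIV (\<lambda>x. \<phi>' x b)"
  unfolding test_function_def by (auto intro: continuous_on_product_then_coordinatewise)

lemma test_function_vanishes_outside:
  assumes t: "test_function \<phi> \<phi>'" and x: "x \<notin> closure {x. \<phi> x \<noteq> 0}"
  shows "\<phi> x = 0" and "\<phi>' x = (\<lambda>_. 0)"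
proof -
  let ?U = "- closure {x. \<phi> x \<noteq> 0}"
  have z: "\<phi> y = 0" if "y \<in> ?U" for y
    using that closure_subset[of "{x. \<phi> x \<noteq> 0}"] by auto
  then show "\<phi> x = 0" using x by blast
  have U: "open ?U" "x \<in> ?U" using x by auto
  have "((\<lambda>_. 0) has_derivative (\<lambda>_. 0)) (at x)" by simp
  then have "(\<phi> has_derivative (\<lambda>_. 0)) (at x)"
    by (rule has_derivative_transform_within_open[OF _ U]) (metis z)
  moreover have "(\<phi> has_derivative \<phi>' x) (at x)" using t by (simp add: test_function_def)
  ultimately show "\<phi>' x = (\<lambda>_. 0)" by (rule has_derivative_unique[symmetric])
qed

lemma AE_zero_if_test_integrals_zero:
  fixes r :: "'a::euclidean_space \<Rightarrow> real"
  assumes rm [measurable]: "r \<in> borel_measurable lborel"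
    and loc: "\<And>K. compact K \<Longrightarrow> set_integrable lborel K r"
    and zero: "\<And>\<phi> \<phi>'. test_function \<phi> \<phi>' \<Longrightarrow> (\<integral>x. \<phi> x * r x \<partial>lborel) = 0"
  shows "AE x in lborel. r x = 0"
proof (rule AE_zero_if_box_integrals_zero)
  fix a c :: 'a
  show "set_integrable lborel (box a c) r"
    by (rule set_integrable_subset[OF loc[of "cbox a c"]]) (auto simp: box_subset_cbox)
  show "(LINT x:box a c|lborel. r x) = 0"
  proof (cases "box a c = {}")
    case False
    have "(\<lambda>n. \<integral>x. box_bump n a c x * r x \<partial>lborel) \<longlonglongrightarrow> (\<integral>x. indicator (box a c) x * r x \<partial>lborel)"
    proof (rule integral_dominated_convergence[where w="\<lambda>x. indicator (cbox a c) x * \<bar>r x\<bar>"])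
      show "integrable lborel (\<lambda>x. indicator (cbox a c) x * \<bar>r x\<bar>)"
        using integrable_abs[OF loc[of "cbox a c", unfolded set_integrable_def]] by (simp add: abs_mult)
      have [measurable]: "box_bump n a c \<in> borel_measurable lborel" for n
        using continuous_on_test_function[OF test_function_box_bump[OF False]]
        by (simp add: borel_measurable_continuous_onI)
      show "(\<lambda>x. box_bump n a c x * r x) \<in> borel_measurable lborel" for n
        by measurable
      show "AE x in lborel. (\<lambda>n. box_bump n a c x * r x) \<longlonglongrightarrow> indicator (box a c) x * r x"
        by (intro always_eventually allI tendsto_mult_right box_bump_tendsto_indicator[OF False])
      show "AE x in lborel. norm (box_bump n a c x * r x) \<le> indicator (cbox a c) x * \<bar>r x\<bar>" for n
      proof (intro always_eventually allI)
        fix x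
        show "norm (box_bump n a c x * r x) \<le> indicator (cbox a c) x * \<bar>r x\<bar>"
        proof (cases "x \<in> box a c")
          case True
          then have "x \<in> cbox a c" using box_subset_cbox by blast
          then show ?thesis using box_bump_bounds[of n a c x]
            by (simp add: abs_mult mult_left_le_one_le)
        qed (simp add: box_bump_eq_0[OF False])
      qed
    qed simp
    moreover have "(\<integral>x. box_bump n a c x * r x \<partial>lborel) = 0" for n
      using zero test_function_box_bump[OF False] by blast
    ultimately show ?thesis by (simp add: LIMSEQ_const_iff set_lebesgue_integral_def)
  qed (simp add: set_lebesgue_integral_def)
qed

lemma has_weak_grad_iff:
  "has_weak_grad u g \<longleftrightarrow>
     g \<in> borel_measurable lborel \<and>
     (\<forall>K. compact K \<longrightarrow> set_integrable lborel K (\<lambda>x. norm (g x)) \<and> set_integrable lborel K u) \<and>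
     (\<forall>\<phi> \<phi>'. test_function \<phi> \<phi>' \<longrightarrow>
        (\<forall>b\<in>Basis. (\<integral>x. u x * \<phi>' x b \<partial>lborel) = - (\<integral>x. \<phi> x * (g x \<bullet> b) \<partial>lborel)))"
  unfolding has_weak_grad_def test_function_def by blast

lemma set_integrable_inner_Basis:
  fixes g :: "'a \<Rightarrow> 'b::euclidean_space"
  assumes "set_integrable M K (\<lambda>x. norm (g x))" "g \<in> borel_measurable M" "K \<in> sets M" "b \<in> Basis"
  shows "set_integrable M K (\<lambda>x. g x \<bullet> b)"
  by (rule set_integrable_bound[OF assms(1)]) (use assms in \<open>auto simp: set_borel_measurable_def Basis_le_norm\<close>)

lemma has_weak_grad_measurable: "has_weak_grad u g \<Longrightarrow> g \<in> borel_measurable lborel"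
  by (simp add: has_weak_grad_def)

lemma has_weak_grad_set_integrable:
  assumes "has_weak_grad u g" "compact K"
  shows "set_integrable lborel K u" and "set_integrable lborel K (\<lambda>x. norm (g x))"
  using assms unfolding has_weak_grad_def by blast+

lemma has_weak_grad_integration_by_parts:
  "has_weak_grad u g \<Longrightarrow> test_function \<phi> \<phi>' \<Longrightarrow> b \<in> Basis \<Longrightarrow>
     (\<integral>x. u x * \<phi>' x b \<partial>lborel) = - (\<integral>x. \<phi> x * (g x \<bullet> b) \<partial>lborel)"
  unfolding has_weak_grad_iff by blast

lemma has_weak_grad_set_integrable_inner:
  assumes "has_weak_grad u g" "compact K" "b \<in> Basis"
  shows "set_integrable lborel K (\<lambda>x. g x \<bullet> b)"
  using assms has_weak_grad_set_integrable(2) has_weak_grad_measurable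
  by (intro set_integrable_inner_Basis) (auto simp: compact_imp_closed)

lemma has_weak_grad_test_integrable:
  assumes hw: "has_weak_grad u g" and t: "test_function \<phi> \<phi>'" and b: "b \<in> Basis"
  shows "integrable lborel (\<lambda>x. u x * \<phi>' x b)" and "integrable lborel (\<lambda>x. \<phi> x * (g x \<bullet> b))"
proof -
  let ?K = "closure {x. \<phi> x \<noteq> 0}"
  have K: "compact ?K" using t by (simp add: test_function_def)
  note vanish = test_function_vanishes_outside[OF t]
  have "\<exists>B. \<forall>x. \<bar>\<phi>' x b\<bar> \<le> B"
    by (rule bounded_if_continuous_vanishing_outside_compact[OF continuous_on_test_function_deriv[OF t] K])
       (simp add: vanish(2))
  then obtain B where "\<And>x. \<bar>\<phi>' x b\<bar> \<le> B" by blast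
  then have "integrable lborel (\<lambda>x. \<phi>' x b * u x)"
    using continuous_on_test_function_deriv[OF t] vanish(2)
    by (intro integrable_mult_vanishing_outside[OF has_weak_grad_set_integrable(1)[OF hw K]])
       (auto simp: borel_measurable_continuous_onI)
  then show "integrable lborel (\<lambda>x. u x * \<phi>' x b)" by (simp add: mult.commute)
  have "\<exists>B. \<forall>x. \<bar>\<phi> x\<bar> \<le> B"
    by (rule bounded_if_continuous_vanishing_outside_compact[OF continuous_on_test_function[OF t] K])
       (rule vanish(1))
  then obtain B' where B': "\<And>x. \<bar>\<phi> x\<bar> \<le> B'" by blast
  have "\<phi> \<in> borel_measurable lborel"
    using continuous_on_test_function[OF t] by (simp add: borel_measurable_continuous_onI)
  then show "integrable lborel (\<lambda>x. \<phi> x * (g x \<bullet> b))"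
    by (rule integrable_mult_vanishing_outside[OF has_weak_grad_set_integrable_inner[OF hw K b] _ B' vanish(1)])
qed

lemma has_weak_grad_lincomb:
  fixes u v :: "'a::euclidean_space \<Rightarrow> real"
  assumes hu: "has_weak_grad u g" and hv: "has_weak_grad v h"
  shows "has_weak_grad (\<lambda>x. a * u x + b * v x) (\<lambda>x. a *\<^sub>R g x + b *\<^sub>R h x)"
  unfolding has_weak_grad_iff
proof (intro conjI allI impI ballI)
  have [measurable]: "g \<in> borel_measurable lborel" "h \<in> borel_measurable lborel"
    using hu hv by (blast intro: has_weak_grad_measurable)+
  show "(\<lambda>x. a *\<^sub>R g x + b *\<^sub>R h x) \<in> borel_measurable lborel" by measurable
  fix K :: "'a set" assume K: "compact K"
  then have [measurable]: "K \<in> sets lborel" by (simp add: compact_imp_closed)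
  note si = has_weak_grad_set_integrable[OF hu K] has_weak_grad_set_integrable[OF hv K]
  show "set_integrable lborel K (\<lambda>x. a * u x + b * v x)"
    using si by (intro set_integral_add) auto
  have bound: "norm (a *\<^sub>R g x + b *\<^sub>R h x) \<le> \<bar>a\<bar> * norm (g x) + \<bar>b\<bar> * norm (h x)" for x
    using norm_triangle_ineq[of "a *\<^sub>R g x" "b *\<^sub>R h x"] by simp
  show "set_integrable lborel K (\<lambda>x. norm (a *\<^sub>R g x + b *\<^sub>R h x))"
  proof (rule set_integrable_bound)
    show "set_integrable lborel K (\<lambda>x. \<bar>a\<bar> * norm (g x) + \<bar>b\<bar> * norm (h x))"
      using si by (intro set_integral_add) auto
    show "set_borel_measurable lborel K (\<lambda>x. norm (a *\<^sub>R g x + b *\<^sub>R h x))"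
      unfolding set_borel_measurable_def by measurable
    show "AE x in lborel. x \<in> K \<longrightarrow> norm (norm (a *\<^sub>R g x + b *\<^sub>R h x))
            \<le> norm (\<bar>a\<bar> * norm (g x) + \<bar>b\<bar> * norm (h x))"
      using bound by (intro always_eventually allI impI) (simp add: order_trans[OF _ abs_ge_self])
  qed
next
  fix \<phi> :: "'a \<Rightarrow> real" and \<phi>' :: "'a \<Rightarrow> 'a \<Rightarrow> real" and c :: 'a assume t: "test_function \<phi> \<phi>'" and c: "c \<in> Basis"
  note iu = has_weak_grad_test_integrable[OF hu t c] and iv = has_weak_grad_test_integrable[OF hv t c]
  have "(\<integral>x. (a * u x + b * v x) * \<phi>' x c \<partial>lborel)
      = a * (\<integral>x. u x * \<phi>' x c \<partial>lborel) + b * (\<integral>x. v x * \<phi>' x c \<partial>lborel)"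
    using iu iv by (simp add: algebra_simps)
  also have "\<dots> = - (a * (\<integral>x. \<phi> x * (g x \<bullet> c) \<partial>lborel) + b * (\<integral>x. \<phi> x * (h x \<bullet> c) \<partial>lborel))"
    using hu hv t c by (simp add: has_weak_grad_integration_by_parts)
  also have "\<dots> = - (\<integral>x. \<phi> x * ((a *\<^sub>R g x + b *\<^sub>R h x) \<bullet> c) \<partial>lborel)"
    using iu iv by (simp add: algebra_simps inner_add_left)
  finally show "(\<integral>x. (a * u x + b * v x) * \<phi>' x c \<partial>lborel)
      = - (\<integral>x. \<phi> x * ((a *\<^sub>R g x + b *\<^sub>R h x) \<bullet> c) \<partial>lborel)" .
qed

lemma has_weak_grad_unique:
  assumes h1: "has_weak_grad u g1" and h2: "has_weak_grad u g2"
  shows "AE x in lborel. g1 x = g2 x"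
proof -
  have [measurable]: "g1 \<in> borel_measurable lborel" "g2 \<in> borel_measurable lborel"
    using h1 h2 by (blast intro: has_weak_grad_measurable)+
  have "AE x in lborel. (g1 x - g2 x) \<bullet> c = 0" if c: "c \<in> Basis" for c
  proof (rule AE_zero_if_test_integrals_zero)
    show "(\<lambda>x. (g1 x - g2 x) \<bullet> c) \<in> borel_measurable lborel" by measurable
    show "set_integrable lborel K (\<lambda>x. (g1 x - g2 x) \<bullet> c)" if "compact K" for K
      using has_weak_grad_set_integrable_inner[OF h1 that c] has_weak_grad_set_integrable_inner[OF h2 that c]
      by (simp add: inner_diff_left set_integral_diff)
    show "(\<integral>x. \<phi> x * ((g1 x - g2 x) \<bullet> c) \<partial>lborel) = 0" if t: "test_function \<phi> \<phi>'" for \<phi> \<phi>'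
    proof -
      have "(\<integral>x. \<phi> x * (g1 x \<bullet> c) \<partial>lborel) = (\<integral>x. \<phi> x * (g2 x \<bullet> c) \<partial>lborel)"
        using has_weak_grad_integration_by_parts[OF h1 t c] has_weak_grad_integration_by_parts[OF h2 t c]
        by simp
      then show ?thesis
        using has_weak_grad_test_integrable(2)[OF h1 t c] has_weak_grad_test_integrable(2)[OF h2 t c]
        by (simp add: inner_diff_left right_diff_distrib)
    qed
  qed
  then have "AE x in lborel. \<forall>c\<in>Basis. (g1 x - g2 x) \<bullet> c = 0"
    by (simp add: eventually_ball_finite_distrib)
  then show ?thesis
    by eventually_elim (simp add: euclidean_all_zero_iff)
qed

lemma has_weak_grad_wgrad:
  assumes "has_weak_grad u g"
  shows "has_weak_grad u (wgrad u)"
  unfolding wgrad_def by (rule someI[where P = "has_weak_grad u", OF assms])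

lemma wgrad_AE_eq: "has_weak_grad u g \<Longrightarrow> AE x in lborel. wgrad u x = g x"
  by (rule has_weak_grad_unique[OF has_weak_grad_wgrad])

section \<open>The seminorm and the pairing of a fixed order\<close>

definition increment :: "('a \<Rightarrow> real) \<Rightarrow> 'a \<times> 'a \<Rightarrow> real" where
  "increment u z = u (fst z) - u (snd z)"

definition gagliardo_measure :: "real \<Rightarrow> real \<Rightarrow> ('a::euclidean_space \<times> 'a) measure" where
  "gagliardo_measure p s = density (lborel \<Otimes>\<^sub>M lborel)
     (\<lambda>z. ennreal (cNsp DIM('a) s p / norm (fst z - snd z) powr (real DIM('a) + s * p)))"

lemma sets_gagliardo_measure [measurable_cong, simp]:
  "sets (gagliardo_measure p s) = sets (lborel \<Otimes>\<^sub>M lborel)"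
  by (simp add: gagliardo_measure_def)

lemma borel_measurable_increment [measurable]:
  assumes "u \<in> borel_measurable lborel"
  shows "increment u \<in> borel_measurable (lborel \<Otimes>\<^sub>M lborel)"
  unfolding increment_def
  by (intro borel_measurable_diff measurable_compose[OF measurable_fst assms]
      measurable_compose[OF measurable_snd assms])

lemma increment_lincomb: "increment (\<lambda>x. a * u x + b * v x) = (\<lambda>z. a *\<^sub>R increment u z + b *\<^sub>R increment v z)"
  by (auto simp: increment_def algebra_simps)

lemma increment_diff: "increment (\<lambda>x. w x - u x) = (\<lambda>z. increment w z - increment u z)"
  by (auto simp: increment_def)

lemma cNsp_nonneg:
  assumes "0 < s" "s < 1" "1 < p" "0 < N"
  shows "0 \<le> cNsp N s p"
proof -
  have "0 < p * s" "1 \<le> real N" using assms by simp_all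
  then have "0 < p * s + p + real N - 2" using assms by linarith
  then have "0 < (p * s + p + real N - 2) / 2" by simp
  then show ?thesis
    using assms unfolding cNsp_def by (auto intro!: divide_nonneg_pos mult_nonneg_nonneg Gamma_real_pos)
qed

lemma seminorm_pow_0: "seminorm_pow p 0 u = norm_powr_nn_integral p lborel u"
  by (simp add: seminorm_pow_def norm_powr_nn_integral_def)

lemma pairing_0: "pairing p 0 u v = duality_pairing p lborel u v"
  by (simp add: pairing_def duality_pairing_def duality_map_def)

lemma seminorm_pow_1:
  assumes "has_weak_grad u g"
  shows "seminorm_pow p 1 u = norm_powr_nn_integral p lborel g"
  using assms wgrad_AE_eq[OF assms] unfolding seminorm_pow_def norm_powr_nn_integral_def
  by (auto intro!: nn_integral_cong_AE elim: eventually_mono)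

lemma pairing_1:
  assumes "has_weak_grad u g" "has_weak_grad v h"
  shows "pairing p 1 u v = duality_pairing p lborel g h"
proof -
  have "pairing p 1 u v = (\<integral>x. norm (wgrad u x) powr (p - 2) * (wgrad u x \<bullet> wgrad v x) \<partial>lborel)"
    by (simp add: pairing_def)
  also have "\<dots> = duality_pairing p lborel g h"
    unfolding duality_pairing_def
  proof (rule integral_cong_AE)
  have [measurable]: "wgrad u \<in> borel_measurable lborel" "wgrad v \<in> borel_measurable lborel"
    "g \<in> borel_measurable lborel" "h \<in> borel_measurable lborel"
    using assms by (blast intro: has_weak_grad_measurable has_weak_grad_wgrad)+
  show "(\<lambda>x. norm (wgrad u x) powr (p - 2) * (wgrad u x \<bullet> wgrad v x)) \<in> borel_measurable lborel"
       "(\<lambda>x. duality_map p (g x) \<bullet> h x) \<in> borel_measurable lborel"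
    unfolding duality_map_def by measurable
  show "AE x in lborel. norm (wgrad u x) powr (p - 2) * (wgrad u x \<bullet> wgrad v x) = duality_map p (g x) \<bullet> h x"
    using wgrad_AE_eq[OF assms(1)] wgrad_AE_eq[OF assms(2)] by eventually_elim (simp add: duality_map_def)
  qed
  finally show ?thesis .
qed

lemma has_weak_grad_if_seminorm_pow_1_finite: "seminorm_pow p 1 u < \<infinity> \<Longrightarrow> \<exists>g. has_weak_grad u g"
  by (cases "\<exists>g. has_weak_grad u g") (auto simp: seminorm_pow_def)

lemma seminorm_pow_fractional:
  fixes u :: "'a::euclidean_space \<Rightarrow> real"
  assumes s: "0 < s" "s < 1" and p: "1 < p" and [measurable]: "u \<in> borel_measurable lborel"
  shows "seminorm_pow p s u = norm_powr_nn_integral p (gagliardo_measure p s) (increment u)"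
proof -
  define c where "c = cNsp DIM('a) s p"
  have c0: "0 \<le> c" unfolding c_def using cNsp_nonneg[OF s p] by simp
  have "seminorm_pow p s u = (\<integral>\<^sup>+ z. ennreal c * ennreal (\<bar>increment u z\<bar> powr p
                                   / norm (fst z - snd z) powr (real DIM('a) + s * p)) \<partial>(lborel \<Otimes>\<^sub>M lborel))"
    using s by (simp add: seminorm_pow_def c_def increment_def nn_integral_cmult)
  also have "\<dots> = (\<integral>\<^sup>+ z. ennreal (c / norm (fst z - snd z) powr (real DIM('a) + s * p))
                          * ennreal (norm (increment u z) powr p) \<partial>(lborel \<Otimes>\<^sub>M lborel))"
    using c0 by (intro nn_integral_cong) (simp add: ennreal_mult[symmetric])
  also have "\<dots> = norm_powr_nn_integral p (gagliardo_measure p s) (increment u)"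
    unfolding norm_powr_nn_integral_def gagliardo_measure_def c_def
    by (rule nn_integral_density[symmetric]) measurable
  finally show ?thesis .
qed

lemma pairing_fractional:
  fixes u v :: "'a::euclidean_space \<Rightarrow> real"
  assumes s: "0 < s" "s < 1" and p: "1 < p"
    and [measurable]: "u \<in> borel_measurable lborel" "v \<in> borel_measurable lborel"
  shows "pairing p s u v = duality_pairing p (gagliardo_measure p s) (increment u) (increment v)"
proof -
  define c where "c = cNsp DIM('a) s p"
  have c0: "0 \<le> c" unfolding c_def using cNsp_nonneg[OF s p] by simp
  have "pairing p s u v = (\<integral>z. (c / norm (fst z - snd z) powr (real DIM('a) + s * p))
          *\<^sub>R (duality_map p (increment u z) \<bullet> increment v z) \<partial>(lborel \<Otimes>\<^sub>M lborel))"
    using s by (simp add: pairing_def c_def increment_def duality_map_def flip: integral_mult_right_zero)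
  also have "\<dots> = duality_pairing p (gagliardo_measure p s) (increment u) (increment v)"
    unfolding duality_pairing_def gagliardo_measure_def c_def
    by (rule integral_density[symmetric]) (use p c0 in \<open>auto simp: c_def\<close>)
  finally show ?thesis .
qed

definition seminorm_pow_real :: "real \<Rightarrow> real \<Rightarrow> ('a::euclidean_space \<Rightarrow> real) \<Rightarrow> real" where
  "seminorm_pow_real p s u = enn2real (seminorm_pow p s u)"

lemma seminorm_pow_real_nonneg: "0 \<le> seminorm_pow_real p s u"
  by (simp add: seminorm_pow_real_def)

lemma seminorm_pow_lincomb:
  fixes u v :: "'a::euclidean_space \<Rightarrow> real"
  assumes p: "1 < p" and s: "0 \<le> s" "s \<le> 1"
    and [measurable]: "u \<in> borel_measurable lborel" "v \<in> borel_measurable lborel"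
    and uf: "seminorm_pow p s u < \<infinity>" and vf: "seminorm_pow p s v < \<infinity>"
  shows "seminorm_pow p s (\<lambda>x. a * u x + b * v x) < \<infinity>"
    and "seminorm_pow_real p s (\<lambda>x. a * u x + b * v x)
           \<le> 2 powr p * (\<bar>a\<bar> powr p * seminorm_pow_real p s u + \<bar>b\<bar> powr p * seminorm_pow_real p s v)"
proof -
  have "0 \<le> p" using p by simp
  consider "s = 0" | "0 < s" "s < 1" | "s = 1" using s by linarith
  then have "seminorm_pow p s (\<lambda>x. a * u x + b * v x) < \<infinity> \<and>
    seminorm_pow_real p s (\<lambda>x. a * u x + b * v x)
      \<le> 2 powr p * (\<bar>a\<bar> powr p * seminorm_pow_real p s u + \<bar>b\<bar> powr p * seminorm_pow_real p s v)"
  proof cases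
    case 1
    then show ?thesis
      using norm_powr_nn_integral_lincomb[OF \<open>0 \<le> p\<close>, of u lborel v a b] uf vf
      by (simp add: seminorm_pow_real_def seminorm_pow_0)
  next
    case 2
    then show ?thesis
      using norm_powr_nn_integral_lincomb[OF \<open>0 \<le> p\<close>, of "increment u" "gagliardo_measure p s" "increment v" a b]
        uf vf p
      by (simp add: seminorm_pow_real_def seminorm_pow_fractional increment_lincomb)
  next
    case 3
    obtain g h where g: "has_weak_grad u g" and h: "has_weak_grad v h"
      using has_weak_grad_if_seminorm_pow_1_finite uf vf 3 by blast
    then show ?thesis
      using norm_powr_nn_integral_lincomb[OF \<open>0 \<le> p\<close> has_weak_grad_measurable[OF g]
          has_weak_grad_measurable[OF h], of a b] uf vf 3
      by (simp add: seminorm_pow_real_def seminorm_pow_1 seminorm_pow_1[OF has_weak_grad_lincomb[OF g h]])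
  qed
  then show "seminorm_pow p s (\<lambda>x. a * u x + b * v x) < \<infinity>"
    and "seminorm_pow_real p s (\<lambda>x. a * u x + b * v x)
           \<le> 2 powr p * (\<bar>a\<bar> powr p * seminorm_pow_real p s u + \<bar>b\<bar> powr p * seminorm_pow_real p s v)"
    by auto
qed

lemma pairing_bound:
  fixes u v :: "'a::euclidean_space \<Rightarrow> real"
  assumes p: "1 < p" and s: "0 \<le> s" "s \<le> 1"
    and [measurable]: "u \<in> borel_measurable lborel" "v \<in> borel_measurable lborel"
    and uf: "seminorm_pow p s u < \<infinity>" and vf: "seminorm_pow p s v < \<infinity>"
  shows "\<bar>pairing p s u v\<bar> \<le> seminorm_pow_real p s u powr ((p - 1) / p) * seminorm_pow_real p s v powr (1 / p)"
proof -
  consider "s = 0" | "0 < s" "s < 1" | "s = 1" using s by linarith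
  then show ?thesis
  proof cases
    case 1
    then show ?thesis
      using duality_pairing_bound(2)[OF p, of u lborel v] uf vf
      by (simp add: seminorm_pow_real_def seminorm_pow_0 pairing_0)
  next
    case 2
    then show ?thesis
      using duality_pairing_bound(2)[OF p, of "increment u" "gagliardo_measure p s" "increment v"] uf vf p
      by (simp add: seminorm_pow_real_def seminorm_pow_fractional pairing_fractional)
  next
    case 3
    obtain g h where g: "has_weak_grad u g" and h: "has_weak_grad v h"
      using has_weak_grad_if_seminorm_pow_1_finite uf vf 3 by blast
    then show ?thesis
      using duality_pairing_bound(2)[OF p has_weak_grad_measurable[OF g] has_weak_grad_measurable[OF h]] uf vf 3
      by (simp add: seminorm_pow_real_def seminorm_pow_1 pairing_1)
  qed
qed

lemma pairing_lincomb_right: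
  fixes u v w :: "'a::euclidean_space \<Rightarrow> real"
  assumes p: "1 < p" and s: "0 \<le> s" "s \<le> 1"
    and [measurable]: "u \<in> borel_measurable lborel" "v \<in> borel_measurable lborel" "w \<in> borel_measurable lborel"
    and uf: "seminorm_pow p s u < \<infinity>" and vf: "seminorm_pow p s v < \<infinity>" and wf: "seminorm_pow p s w < \<infinity>"
  shows "pairing p s u (\<lambda>x. a * v x + b * w x) = a * pairing p s u v + b * pairing p s u w"
proof -
  consider "s = 0" | "0 < s" "s < 1" | "s = 1" using s by linarith
  then show ?thesis
  proof cases
    case 1
    then show ?thesis
      using duality_pairing_lincomb_right[OF p, of u lborel v w a b] uf vf wf
      by (simp add: seminorm_pow_0 pairing_0)
  next
    case 2
    then show ?thesis
      using duality_pairing_lincomb_right[OF p, of "increment u" "gagliardo_measure p s" "increment v" "increment w" a b]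
        uf vf wf p
      by (simp add: seminorm_pow_fractional pairing_fractional increment_lincomb)
  next
    case 3
    obtain g h k where g: "has_weak_grad u g" and h: "has_weak_grad v h" and k: "has_weak_grad w k"
      using has_weak_grad_if_seminorm_pow_1_finite uf vf wf 3 by blast
    then show ?thesis
      using duality_pairing_lincomb_right[OF p has_weak_grad_measurable[OF g] has_weak_grad_measurable[OF h]
          has_weak_grad_measurable[OF k], of a b] uf vf wf 3
      by (simp add: seminorm_pow_1 pairing_1 pairing_1[OF g has_weak_grad_lincomb[OF h k]])
  qed
qed

lemma pairing_diff_bound:
  fixes u v w :: "'a::euclidean_space \<Rightarrow> real"
  assumes p: "1 < p" and s: "0 \<le> s" "s \<le> 1"
    and [measurable]: "u \<in> borel_measurable lborel" "v \<in> borel_measurable lborel" "w \<in> borel_measurable lborel"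
    and uf: "seminorm_pow p s u < \<infinity>" and vf: "seminorm_pow p s v < \<infinity>" and wf: "seminorm_pow p s w < \<infinity>"
    and C: "0 \<le> C" "0 \<le> \<eta>"
    and estimate: "\<And>a b::'a. norm (duality_map p a - duality_map p b) powr (p / (p - 1))
                     \<le> C * norm (a - b) powr p + \<eta> * (norm a powr p + norm b powr p)"
  shows "\<bar>pairing p s w v - pairing p s u v\<bar> \<le>
     (C * seminorm_pow_real p s (\<lambda>x. w x - u x) + \<eta> * (seminorm_pow_real p s w + seminorm_pow_real p s u))
       powr ((p - 1) / p) * seminorm_pow_real p s v powr (1 / p)"
proof -
  note estimate_real = duality_map_diff_estimate_real[OF estimate]
  consider "s = 0" | "0 < s" "s < 1" | "s = 1" using s by linarith
  then show ?thesis
  proof cases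
    case 1
    then show ?thesis
      using duality_pairing_diff_bound[OF p _ _ _ _ _ _ C estimate_real, of w lborel u v] uf vf wf
      by (simp add: seminorm_pow_real_def seminorm_pow_0 pairing_0)
  next
    case 2
    then show ?thesis
      using duality_pairing_diff_bound[OF p _ _ _ _ _ _ C estimate_real,
          of "increment w" "gagliardo_measure p s" "increment u" "increment v"] uf vf wf p
      by (simp add: seminorm_pow_real_def seminorm_pow_fractional pairing_fractional increment_diff)
  next
    case 3
    obtain g h k where g: "has_weak_grad u g" and h: "has_weak_grad v h" and k: "has_weak_grad w k"
      using has_weak_grad_if_seminorm_pow_1_finite uf vf wf 3 by blast
    have kg: "has_weak_grad (\<lambda>x. w x - u x) (\<lambda>x. k x - g x)"
      using has_weak_grad_lincomb[OF k g, of 1 "- 1"] by simp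
    show ?thesis
      using duality_pairing_diff_bound[OF p has_weak_grad_measurable[OF k] has_weak_grad_measurable[OF g]
          has_weak_grad_measurable[OF h] _ _ _ C estimate] uf vf wf 3
      by (simp add: seminorm_pow_real_def seminorm_pow_1[OF g] seminorm_pow_1[OF h] seminorm_pow_1[OF k]
          seminorm_pow_1[OF kg] pairing_1[OF g h] pairing_1[OF k h])
  qed
qed

section \<open>Integration over the order\<close>

lemma borel_measurable_Gamma_real [measurable]:
  "f \<in> borel_measurable M \<Longrightarrow> (\<lambda>x. Gamma (f x :: real)) \<in> borel_measurable M"
  unfolding Gamma_def
  by (intro borel_measurable_inverse borel_measurable_continuous_on[OF continuous_on_rGamma])

lemma borel_measurable_cNsp [measurable]: "(\<lambda>s. cNsp N s p) \<in> borel_measurable borel"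
  unfolding cNsp_def by measurable

lemma sigma_finite_lborel_pair: "sigma_finite_measure (lborel \<Otimes>\<^sub>M (lborel :: 'a::euclidean_space measure))"
  by (simp add: lborel.sigma_finite_measure_axioms sigma_finite_pair_measure)

lemma borel_measurable_seminorm_pow:
  fixes u :: "'a::euclidean_space \<Rightarrow> real"
  assumes [measurable]: "u \<in> borel_measurable lborel"
  shows "(\<lambda>s. seminorm_pow p s u) \<in> borel_measurable borel"
proof -
  have "(\<lambda>s. \<integral>\<^sup>+ z. ennreal (\<bar>u (fst z) - u (snd z)\<bar> powr p
           / norm (fst z - snd z) powr (real DIM('a) + s * p)) \<partial>(lborel \<Otimes>\<^sub>M lborel)) \<in> borel_measurable borel"
    by (rule sigma_finite_measure.borel_measurable_nn_integral[OF sigma_finite_lborel_pair]) measurable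
  then show ?thesis unfolding seminorm_pow_def by measurable
qed

lemma borel_measurable_pairing:
  fixes u v :: "'a::euclidean_space \<Rightarrow> real"
  assumes [measurable]: "u \<in> borel_measurable lborel" "v \<in> borel_measurable lborel"
  shows "(\<lambda>s. pairing p s u v) \<in> borel_measurable borel"
proof -
  have "(\<lambda>s. \<integral>z. \<bar>u (fst z) - u (snd z)\<bar> powr (p - 2) * (u (fst z) - u (snd z)) * (v (fst z) - v (snd z))
           / norm (fst z - snd z) powr (real DIM('a) + s * p) \<partial>(lborel \<Otimes>\<^sub>M lborel)) \<in> borel_measurable borel"
    by (rule sigma_finite_measure.borel_measurable_lebesgue_integral[OF sigma_finite_lborel_pair]) measurable
  then show ?thesis unfolding pairing_def by measurable
qed

lemma Xp_subset_Xp_UNIV: "Xp mu p \<Omega> \<subseteq> Xp mu p UNIV"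
  by (auto simp: Xp_def)

lemma mem_Xp_UNIV: "u \<in> Xp mu p UNIV \<longleftrightarrow> u \<in> borel_measurable lborel \<and> rho_pow mu p u < \<infinity>"
  by (simp add: Xp_def)

locale superposition =
  fixes mu :: "real measure" and p :: real
  assumes sets_mu: "sets mu = sets (restrict_space borel {0..1})"
    and p_gt_1: "1 < p"
begin

definition energy :: "('a::euclidean_space \<Rightarrow> real) \<Rightarrow> real" where
  "energy u = (\<integral>s. seminorm_pow_real p s u \<partial>mu)"

lemma energy_nonneg: "0 \<le> energy u"
  unfolding energy_def by (intro integral_nonneg_AE) (simp add: seminorm_pow_real_nonneg)

lemma borel_measurable_mu: "f \<in> borel_measurable borel \<Longrightarrow> f \<in> borel_measurable mu"
  unfolding measurable_cong_sets[OF sets_mu refl] by (rule measurable_restrict_space1)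

lemma AE_mu_unit_interval: "AE s in mu. 0 \<le> s \<and> s \<le> 1"
  using sets_eq_imp_space_eq[OF sets_mu] by (intro AE_I2) (simp add: space_restrict_space)

lemma borel_measurable_seminorm_pow_mu:
  "u \<in> borel_measurable lborel \<Longrightarrow> (\<lambda>s. seminorm_pow p s u) \<in> borel_measurable mu"
  by (intro borel_measurable_mu borel_measurable_seminorm_pow)

lemma borel_measurable_seminorm_pow_real_mu:
  "u \<in> borel_measurable lborel \<Longrightarrow> (\<lambda>s. seminorm_pow_real p s u) \<in> borel_measurable mu"
  unfolding seminorm_pow_real_def by (intro borel_measurable_enn2real borel_measurable_seminorm_pow_mu)

lemma borel_measurable_pairing_mu:
  "u \<in> borel_measurable lborel \<Longrightarrow> v \<in> borel_measurable lborel \<Longrightarrow> (\<lambda>s. pairing p s u v) \<in> borel_measurable mu"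
  by (intro borel_measurable_mu borel_measurable_pairing)

lemma
  assumes "u \<in> Xp mu p UNIV"
  shows AE_seminorm_pow_finite: "AE s in mu. seminorm_pow p s u < \<infinity>"
    and integrable_seminorm_pow_real: "integrable mu (\<lambda>s. seminorm_pow_real p s u)"
    and rho_pow_eq_energy: "rho_pow mu p u = ennreal (energy u)"
proof -
  have um: "u \<in> borel_measurable lborel" and uf: "rho_pow mu p u < \<infinity>"
    using assms by (simp_all add: mem_Xp_UNIV)
  show ae: "AE s in mu. seminorm_pow p s u < \<infinity>"
    using nn_integral_PInf_AE[OF borel_measurable_seminorm_pow_mu[OF um]] uf
    by (simp add: rho_pow_def less_top)
  have eq: "rho_pow mu p u = (\<integral>\<^sup>+ s. ennreal (seminorm_pow_real p s u) \<partial>mu)"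
    unfolding rho_pow_def seminorm_pow_real_def using ae
    by (intro nn_integral_cong_AE) (auto elim!: eventually_mono simp: less_top)
  show i: "integrable mu (\<lambda>s. seminorm_pow_real p s u)"
    using borel_measurable_seminorm_pow_real_mu[OF um] eq uf
    by (intro integrableI_nonneg) (auto simp: seminorm_pow_real_nonneg)
  show "rho_pow mu p u = ennreal (energy u)"
    unfolding eq energy_def by (rule nn_integral_eq_integral[OF i]) (simp add: seminorm_pow_real_nonneg)
qed

lemma rho_eq_energy: "u \<in> Xp mu p UNIV \<Longrightarrow> rho mu p u = energy u powr (1 / p)"
  by (simp add: rho_def rho_pow_eq_energy energy_nonneg)

lemma energy_less_if_rho_less:
  assumes "u \<in> Xp mu p UNIV" "rho mu p u < \<delta>"
  shows "energy u < \<delta> powr p"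
proof -
  have "(energy u powr (1 / p)) powr p < \<delta> powr p"
    using assms p_gt_1 by (intro powr_less_mono2) (auto simp: rho_eq_energy)
  then show ?thesis using p_gt_1 energy_nonneg[of u] by (simp add: powr_powr)
qed

lemma
  assumes u: "u \<in> Xp mu p UNIV" and v: "v \<in> Xp mu p UNIV"
  shows Xp_UNIV_lincomb: "(\<lambda>x. a * u x + b * v x) \<in> Xp mu p UNIV"
    and energy_lincomb: "energy (\<lambda>x. a * u x + b * v x) \<le> 2 powr p * (\<bar>a\<bar> powr p * energy u + \<bar>b\<bar> powr p * energy v)"
proof -
  have um [measurable]: "u \<in> borel_measurable lborel" and vm [measurable]: "v \<in> borel_measurable lborel"
    using u v by (simp_all add: mem_Xp_UNIV)
  let ?w = "\<lambda>x. a * u x + b * v x"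
  let ?bound = "\<lambda>s. 2 powr p * (\<bar>a\<bar> powr p * seminorm_pow_real p s u + \<bar>b\<bar> powr p * seminorm_pow_real p s v)"
  have ae: "AE s in mu. seminorm_pow p s ?w < \<infinity> \<and> seminorm_pow_real p s ?w \<le> ?bound s"
    using AE_mu_unit_interval AE_seminorm_pow_finite[OF u] AE_seminorm_pow_finite[OF v]
  proof eventually_elim
    case (elim s)
    then show ?case using seminorm_pow_lincomb[OF p_gt_1, of s u v a b] um vm by auto
  qed
  have ae_bound: "AE s in mu. seminorm_pow_real p s ?w \<le> ?bound s"
    using ae by (rule eventually_mono) simp
  have bi: "integrable mu ?bound"
    using integrable_seminorm_pow_real[OF u] integrable_seminorm_pow_real[OF v] by auto
  have "rho_pow mu p ?w = (\<integral>\<^sup>+ s. ennreal (seminorm_pow_real p s ?w) \<partial>mu)"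
    unfolding rho_pow_def seminorm_pow_real_def using ae
    by (intro nn_integral_cong_AE) (auto elim!: eventually_mono simp: less_top)
  also have "\<dots> \<le> (\<integral>\<^sup>+ s. ennreal (?bound s) \<partial>mu)"
    using ae_bound by (intro nn_integral_mono_AE) (auto elim: eventually_mono intro: ennreal_leI)
  also have "\<dots> < \<infinity>"
    using nn_integral_eq_integral[OF bi] by (simp add: seminorm_pow_real_nonneg)
  finally show w: "?w \<in> Xp mu p UNIV" by (simp add: mem_Xp_UNIV)
  have "energy ?w \<le> (\<integral>s. ?bound s \<partial>mu)"
    unfolding energy_def using ae integrable_seminorm_pow_real[OF w] bi
    by (intro integral_mono_AE) (auto elim!: eventually_mono)
  also have "\<dots> = 2 powr p * (\<bar>a\<bar> powr p * energy u + \<bar>b\<bar> powr p * energy v)"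
    using integrable_seminorm_pow_real[OF u] integrable_seminorm_pow_real[OF v] by (simp add: energy_def)
  finally show "energy ?w \<le> 2 powr p * (\<bar>a\<bar> powr p * energy u + \<bar>b\<bar> powr p * energy v)" .
qed

lemma Xp_UNIV_diff: "w \<in> Xp mu p UNIV \<Longrightarrow> u \<in> Xp mu p UNIV \<Longrightarrow> (\<lambda>x. w x - u x) \<in> Xp mu p UNIV"
  using Xp_UNIV_lincomb[of w u 1 "- 1"] by simp

lemma
  assumes u: "u \<in> Xp mu p UNIV" and v: "v \<in> Xp mu p UNIV"
  shows integrable_pairing: "integrable mu (\<lambda>s. pairing p s u v)"
    and Ap_bound: "\<bar>Ap mu p u v\<bar> \<le> energy u powr ((p - 1) / p) * rho mu p v"
proof -
  have um: "u \<in> borel_measurable lborel" and vm: "v \<in> borel_measurable lborel"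
    using u v by (simp_all add: mem_Xp_UNIV)
  have "AE s in mu. \<bar>pairing p s u v\<bar>
          \<le> seminorm_pow_real p s u powr ((p - 1) / p) * seminorm_pow_real p s v powr (1 / p)"
    using AE_mu_unit_interval AE_seminorm_pow_finite[OF u] AE_seminorm_pow_finite[OF v]
    by eventually_elim (auto intro: pairing_bound[OF p_gt_1 _ _ um vm])
  note H = integral_Hoelder_bound[OF p_gt_1 borel_measurable_seminorm_pow_real_mu[OF um]
      borel_measurable_seminorm_pow_real_mu[OF vm] borel_measurable_pairing_mu[OF um vm]
      seminorm_pow_real_nonneg seminorm_pow_real_nonneg
      integrable_seminorm_pow_real[OF u] integrable_seminorm_pow_real[OF v] this]
  show "integrable mu (\<lambda>s. pairing p s u v)" by (rule H(1))
  show "\<bar>Ap mu p u v\<bar> \<le> energy u powr ((p - 1) / p) * rho mu p v"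
    using H(2) by (simp add: Ap_def energy_def rho_eq_energy[OF v])
qed

lemma Ap_lincomb_right:
  assumes u: "u \<in> Xp mu p UNIV" and v: "v \<in> Xp mu p UNIV" and w: "w \<in> Xp mu p UNIV"
  shows "Ap mu p u (\<lambda>x. a * v x + b * w x) = a * Ap mu p u v + b * Ap mu p u w"
proof -
  have um: "u \<in> borel_measurable lborel" and vm: "v \<in> borel_measurable lborel"
    and wm: "w \<in> borel_measurable lborel"
    using u v w by (simp_all add: mem_Xp_UNIV)
  have "AE s in mu. pairing p s u (\<lambda>x. a * v x + b * w x) = a * pairing p s u v + b * pairing p s u w"
    using AE_mu_unit_interval AE_seminorm_pow_finite[OF u] AE_seminorm_pow_finite[OF v] AE_seminorm_pow_finite[OF w]
    by eventually_elim (auto intro: pairing_lincomb_right[OF p_gt_1 _ _ um vm wm])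
  then have "Ap mu p u (\<lambda>x. a * v x + b * w x) = (\<integral>s. a * pairing p s u v + b * pairing p s u w \<partial>mu)"
    unfolding Ap_def using integrable_pairing[OF u Xp_UNIV_lincomb[OF v w]] integrable_pairing[OF u v]
      integrable_pairing[OF u w]
    by (intro integral_cong_AE) auto
  also have "\<dots> = a * Ap mu p u v + b * Ap mu p u w"
    using integrable_pairing[OF u v] integrable_pairing[OF u w] by (simp add: Ap_def)
  finally show ?thesis .
qed

lemma Ap_diff_bound:
  fixes u v w :: "'a::euclidean_space \<Rightarrow> real"
  assumes u: "u \<in> Xp mu p UNIV" and v: "v \<in> Xp mu p UNIV" and w: "w \<in> Xp mu p UNIV"
    and C: "0 \<le> C" "0 \<le> \<eta>"
    and estimate: "\<And>a b::'a. norm (duality_map p a - duality_map p b) powr (p / (p - 1))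
                     \<le> C * norm (a - b) powr p + \<eta> * (norm a powr p + norm b powr p)"
  shows "\<bar>Ap mu p w v - Ap mu p u v\<bar>
           \<le> (C * energy (\<lambda>x. w x - u x) + \<eta> * (energy w + energy u)) powr ((p - 1) / p) * rho mu p v"
proof -
  have d: "(\<lambda>x. w x - u x) \<in> Xp mu p UNIV" by (rule Xp_UNIV_diff[OF w u])
  have um: "u \<in> borel_measurable lborel" and vm: "v \<in> borel_measurable lborel"
    and wm: "w \<in> borel_measurable lborel" and dm: "(\<lambda>x. w x - u x) \<in> borel_measurable lborel"
    using u v w d by (simp_all add: mem_Xp_UNIV)
  define E where "E s = C * seminorm_pow_real p s (\<lambda>x. w x - u x)
                        + \<eta> * (seminorm_pow_real p s w + seminorm_pow_real p s u)" for s
  have "AE s in mu. \<bar>pairing p s w v - pairing p s u v\<bar>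
          \<le> E s powr ((p - 1) / p) * seminorm_pow_real p s v powr (1 / p)"
    using AE_mu_unit_interval AE_seminorm_pow_finite[OF u] AE_seminorm_pow_finite[OF v]
      AE_seminorm_pow_finite[OF w]
    unfolding E_def by eventually_elim (rule pairing_diff_bound[OF p_gt_1 _ _ um vm wm _ _ _ C estimate], auto)
  note Hoelder = integral_Hoelder_bound(2)[OF p_gt_1 _ borel_measurable_seminorm_pow_real_mu[OF vm]
      _ _ seminorm_pow_real_nonneg _ integrable_seminorm_pow_real[OF v] this]
  have "\<bar>Ap mu p w v - Ap mu p u v\<bar> = \<bar>\<integral>s. pairing p s w v - pairing p s u v \<partial>mu\<bar>"
    using integrable_pairing[OF w v] integrable_pairing[OF u v] by (simp add: Ap_def)
  also have "\<dots> \<le> (\<integral>s. E s \<partial>mu) powr ((p - 1) / p) * (\<integral>s. seminorm_pow_real p s v \<partial>mu) powr (1 / p)"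
  proof (rule Hoelder)
    show "E \<in> borel_measurable mu" "(\<lambda>s. pairing p s w v - pairing p s u v) \<in> borel_measurable mu"
      unfolding E_def using borel_measurable_seminorm_pow_real_mu[OF dm]
        borel_measurable_seminorm_pow_real_mu[OF wm] borel_measurable_seminorm_pow_real_mu[OF um]
        borel_measurable_pairing_mu[OF wm vm] borel_measurable_pairing_mu[OF um vm]
      by measurable
    show "0 \<le> E s" for s
      unfolding E_def using C by (auto intro!: add_nonneg_nonneg mult_nonneg_nonneg seminorm_pow_real_nonneg)
    show "integrable mu E"
      unfolding E_def using integrable_seminorm_pow_real[OF d] integrable_seminorm_pow_real[OF w]
        integrable_seminorm_pow_real[OF u] by auto
  qed
  also have "(\<integral>s. E s \<partial>mu) = C * energy (\<lambda>x. w x - u x) + \<eta> * (energy w + energy u)"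
    unfolding E_def energy_def
    using integrable_seminorm_pow_real[OF d] integrable_seminorm_pow_real[OF w]
      integrable_seminorm_pow_real[OF u] by simp
  finally show ?thesis by (simp add: rho_eq_energy[OF v] energy_def)
qed

lemma energy_le_energy_diff:
  "u \<in> Xp mu p UNIV \<Longrightarrow> w \<in> Xp mu p UNIV \<Longrightarrow>
     energy w \<le> 2 powr p * (energy (\<lambda>x. w x - u x) + energy u)"
  using energy_lincomb[OF Xp_UNIV_diff, of w u u 1 1] by simp

lemma Ap_continuous:
  fixes u :: "'a::euclidean_space \<Rightarrow> real"
  assumes u: "u \<in> Xp mu p UNIV" and eps: "0 < \<epsilon>"
  shows "\<exists>\<delta>>0. \<forall>w\<in>Xp mu p UNIV. rho mu p (\<lambda>x. w x - u x) < \<delta> \<longrightarrow>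
           (\<forall>v\<in>Xp mu p UNIV. \<bar>Ap mu p w v - Ap mu p u v\<bar> \<le> \<epsilon> * rho mu p v)"
proof -
  define T where "T = \<epsilon> powr (p / (p - 1))"
  have T: "0 < T" "T powr ((p - 1) / p) = \<epsilon>" using eps p_gt_1 by (simp_all add: T_def powr_powr)
  define X where "X = 2 powr p * (1 + energy u) + energy u"
  have X: "0 \<le> X" using energy_nonneg[of u] by (simp add: X_def)
  define \<eta> where "\<eta> = T / (2 * (X + 1))"
  have eta: "0 < \<eta>" "\<eta> * X \<le> T / 2"
    using T X by (auto simp: \<eta>_def field_simps)
  obtain C where C: "0 \<le> C" and estimate: "\<And>a b::'a. norm (duality_map p a - duality_map p b) powr (p / (p - 1))
      \<le> C * norm (a - b) powr p + \<eta> * (norm a powr p + norm b powr p)"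
    using duality_map_diff_estimate[OF p_gt_1 eta(1)] by blast
  define K where "K = min 1 (T / (2 * (C + 1)))"
  have K: "0 < K" "C * K \<le> T / 2" using T C by (auto simp: K_def min_def field_simps)
  show ?thesis
  proof (intro exI[of _ "K powr (1 / p)"] conjI ballI impI)
    show "0 < K powr (1 / p)" using K by simp
    fix w v :: "'a \<Rightarrow> real"
    assume w: "w \<in> Xp mu p UNIV" and close: "rho mu p (\<lambda>x. w x - u x) < K powr (1 / p)"
      and v: "v \<in> Xp mu p UNIV"
    define D where "D = energy (\<lambda>x. w x - u x)"
    have "D < K" using energy_less_if_rho_less[OF Xp_UNIV_diff[OF w u] close] K p_gt_1
      by (simp add: D_def powr_powr)
    then have D: "D \<le> 1" "C * D \<le> T / 2"
      using K mult_left_mono[OF less_imp_le[OF \<open>D < K\<close>] C] by (auto simp: K_def)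
    have "energy w \<le> 2 powr p * (D + energy u)"
      using energy_le_energy_diff[OF u w] by (simp add: D_def)
    also have "\<dots> \<le> 2 powr p * (1 + energy u)" using D(1) by simp
    finally have "\<eta> * (energy w + energy u) \<le> \<eta> * X"
      using eta(1) by (intro mult_left_mono) (auto simp: X_def)
    then have small: "C * D + \<eta> * (energy w + energy u) \<le> T" using D(2) eta(2) by linarith
    have "0 \<le> C * D + \<eta> * (energy w + energy u)"
      using C eta(1) by (simp add: D_def energy_nonneg)
    then have "(C * D + \<eta> * (energy w + energy u)) powr ((p - 1) / p) \<le> \<epsilon>"
      using powr_mono2[OF _ _ small, of "(p - 1) / p"] p_gt_1 T(2) by simp
    moreover have "0 \<le> rho mu p v" by (simp add: rho_def)
    ultimately show "\<bar>Ap mu p w v - Ap mu p u v\<bar> \<le> \<epsilon> * rho mu p v"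
      using Ap_diff_bound[OF u v w C less_imp_le[OF eta(1)] estimate]
      by (simp add: D_def) (meson mult_right_mono order_trans)
  qed
qed

end

theorem lemma5p1:
  fixes \<Omega> :: "'a::euclidean_space set" and p :: real and mu :: "real measure"
  assumes "1 < p" "p < real DIM('a)"
    and "open \<Omega>" "bounded \<Omega>"
    and "sets mu = sets (restrict_space borel {0..1::real})"
    and "finite_measure mu"
    and "\<exists>sb. 0 < sb \<and> sb \<le> 1 \<and> emeasure mu {sb..1} > 0"
  shows "(\<forall>u\<in>Xp mu p \<Omega>. \<forall>v\<in>Xp mu p \<Omega>. \<forall>w\<in>Xp mu p \<Omega>. \<forall>a b::real.
            Ap mu p u (\<lambda>x. a * v x + b * w x) = a * Ap mu p u v + b * Ap mu p u w)
       \<and> (\<forall>u\<in>Xp mu p \<Omega>. \<exists>C. \<forall>v\<in>Xp mu p \<Omega>. \<bar>Ap mu p u v\<bar> \<le> C * rho mu p v)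
       \<and> (\<forall>u\<in>Xp mu p \<Omega>. \<forall>\<epsilon>>0. \<exists>\<delta>>0. \<forall>w\<in>Xp mu p \<Omega>.
            rho mu p (\<lambda>x. w x - u x) < \<delta> \<longrightarrow>
            (\<forall>v\<in>Xp mu p \<Omega>. \<bar>Ap mu p w v - Ap mu p u v\<bar> \<le> \<epsilon> * rho mu p v))"
proof -
  interpret superposition mu p
    using assms(1,5) by unfold_locales
  have X: "u \<in> Xp mu p UNIV" if "u \<in> Xp mu p \<Omega>" for u
    using that Xp_subset_Xp_UNIV by blast
  show ?thesis
  proof (intro conjI ballI allI impI)
    show "Ap mu p u (\<lambda>x. a * v x + b * w x) = a * Ap mu p u v + b * Ap mu p u w"
      if "u \<in> Xp mu p \<Omega>" "v \<in> Xp mu p \<Omega>" "w \<in> Xp mu p \<Omega>" for u v w and a b :: real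
      using Ap_lincomb_right X that by blast
    show "\<exists>C. \<forall>v\<in>Xp mu p \<Omega>. \<bar>Ap mu p u v\<bar> \<le> C * rho mu p v" if "u \<in> Xp mu p \<Omega>" for u
      using Ap_bound X that by blast
    show "\<exists>\<delta>>0. \<forall>w\<in>Xp mu p \<Omega>. rho mu p (\<lambda>x. w x - u x) < \<delta> \<longrightarrow>
            (\<forall>v\<in>Xp mu p \<Omega>. \<bar>Ap mu p w v - Ap mu p u v\<bar> \<le> \<epsilon> * rho mu p v)"
      if "u \<in> Xp mu p \<Omega>" "0 < \<epsilon>" for u \<epsilon>
      using Ap_continuous[OF X that(2)] that X by meson
  qed
qed

end
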